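(* Let $|\psi\rangle\in(\mathbb{C}^d)^{\otimes N}$ be a normalized state, let $0<\alpha<1$, and suppose $s\in\mathbb{R}$ satisfies $S^\alpha(\rho_{[1..k]})\le s$ for all $k=1,\dots,N-1$, where $\rho_{[1..k]}$ is the reduced density operator of the first $k$ sites. Then for every $\varepsilon>0$ and every integer $$D\ge (1-\alpha)\,e^{s}\Big(\frac{2(N-1)}{\varepsilon}\Big)^{\alpha/(1-\alpha)}$$ there is an open-boundary MPS $|\psi_D\rangle$ of bond dimension at most $D$ with $\||\psi\rangle-|\psi_D\rangle\|^2\le\varepsilon$. In particular, if $s\le \kappa\log N+s_0$ for constants $\kappa,s_0$, then an accuracy $\varepsilon=\varepsilon_0/N$ is achievable with a bond dimension $D$ that grows only polynomially in $N$.
   Context: The Rényi entropy of order $\alpha\in(0,1)$ is $S^\alpha(\rho)=\frac{1}{1-\alpha}\log\mathrm{Tr}(\rho^\alpha)$ (natural logarithm). An open-boundary MPS with bond dimension at most $D$ on $N$ sites of local dimension $d$ is a vector $\sum_{i_1,\dots,i_N}A^{[1]i_1}\cdots A^{[N]i_N}|i_1\cdots i_N\rangle$ with $A^{[k]i}$ complex $D_k\times D_{k+1}$ matrices, $D_1=D_{N+1}=1$, $D_k\le D$. *)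

theory Defs
  imports Complex_Main "Jordan_Normal_Form.Char_Poly"
begin

text \<open>Basis of (C^d)^{\<otimes> n}: index tuples of length n with entries in {0..<d}.
  A state is a function from such tuples to complex amplitudes.\<close>
definition tuples :: "nat \<Rightarrow> nat \<Rightarrow> nat list set" where
  "tuples d n = {xs. length xs = n \<and> set xs \<subseteq> {..<d}}"

text \<open>Base-d decoding of a matrix index i < d^k into a tuple of length k (big-endian).\<close>
fun dec :: "nat \<Rightarrow> nat \<Rightarrow> nat \<Rightarrow> nat list" where
  "dec d 0 i = []"
| "dec d (Suc k) i = (i div d ^ k) # dec d k (i mod d ^ k)"

definition normalized :: "nat \<Rightarrow> nat \<Rightarrow> (nat list \<Rightarrow> complex) \<Rightarrow> bool" where
  "normalized d N psi \<longleftrightarrow> (\<Sum>xs\<in>tuples d N. (cmod (psi xs))^2) = 1"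

definition rdm :: "nat \<Rightarrow> nat \<Rightarrow> (nat list \<Rightarrow> complex) \<Rightarrow> nat \<Rightarrow> complex mat" where
  "rdm d N psi k = mat (d ^ k) (d ^ k)
     (\<lambda>(i, j). \<Sum>y\<in>tuples d (N - k). psi (dec d k i @ y) * cnj (psi (dec d k j @ y)))"

text \<open>Tr(rho^alpha) via the spectral calculus: sum over the eigenvalues (with algebraic
  multiplicity) of lambda^alpha.\<close>
definition tr_pow :: "real \<Rightarrow> complex mat \<Rightarrow> real" where
  "tr_pow a rho = (\<Sum>z\<in>{z. poly (char_poly rho) z = 0}.
       real (order z (char_poly rho)) * (Re z) powr a)"

definition renyi :: "real \<Rightarrow> complex mat \<Rightarrow> real" where
  "renyi a rho = 1 / (1 - a) * ln (tr_pow a rho)"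

text \<open>Open-boundary MPS: A k i is the matrix at site k (1..N) for physical index i,
  of size Dims k x Dims (k+1).\<close>
fun mat_chain :: "(nat \<Rightarrow> nat \<Rightarrow> complex mat) \<Rightarrow> (nat \<Rightarrow> nat) \<Rightarrow> nat \<Rightarrow> nat list \<Rightarrow> complex mat" where
  "mat_chain A Dims k [] = 1\<^sub>m (Dims k)"
| "mat_chain A Dims k (x # xs) = A k x * mat_chain A Dims (Suc k) xs"

definition mps_vec :: "(nat \<Rightarrow> nat \<Rightarrow> complex mat) \<Rightarrow> (nat \<Rightarrow> nat) \<Rightarrow> nat list \<Rightarrow> complex" where
  "mps_vec A Dims xs = mat_chain A Dims 1 xs $$ (0, 0)"

definition is_mps :: "nat \<Rightarrow> nat \<Rightarrow> nat \<Rightarrow> (nat list \<Rightarrow> complex) \<Rightarrow> bool" where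
  "is_mps d N D phi \<longleftrightarrow> (\<exists>A Dims.
     Dims 1 = 1 \<and> Dims (N + 1) = 1 \<and> (\<forall>k\<in>{1..N+1}. Dims k \<le> D) \<and>
     (\<forall>k\<in>{1..N}. \<forall>i<d. A k i \<in> carrier_mat (Dims k) (Dims (Suc k))) \<and>
     (\<forall>xs\<in>tuples d N. phi xs = mps_vec A Dims xs))"

definition dist_sq :: "nat \<Rightarrow> nat \<Rightarrow> (nat list \<Rightarrow> complex) \<Rightarrow> (nat list \<Rightarrow> complex) \<Rightarrow> real" where
  "dist_sq d N psi phi = (\<Sum>xs\<in>tuples d N. (cmod (psi xs - phi xs))^2)"

end

theory Submission
  imports Defs "Jordan_Normal_Form.Schur_Decomposition" "HOL-Analysis.Convex"
begin

(* At every cut k the reduced density matrix rho_k of the first k sites is Hermitian, so a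
   unitary U_k diagonalises it.  Its eigenvalues lam_c are the Schmidt weights of psi across the
   cut: squared norms of the components of psi along the columns of U_k.  They are nonnegative,
   sum to 1, and Tr rho_k^a = sum lam_c^a <= exp ((1-a) s) by the entropy bound.  Projecting the
   first k sites onto the D columns with the largest weights discards at most
   a (1-a)^((1-a)/a) (sum lam_c^a)^(1/a) / D^((1-a)/a)   (Young's inequality),
   which the hypothesis on D makes at most eps / (2 (N-1)).  Applying these cut projections for
   k = N-1, ..., 1 in turn yields an MPS of bond dimension D, and the errors of the cuts add up. *)

section \<open>Adjoints, unitary matrices and the spectral theorem\<close>

definition adjm :: "complex mat \<Rightarrow> complex mat" where
  "adjm A = mat (dim_col A) (dim_row A) (\<lambda>(i,j). cnj (A $$ (j,i)))"

lemma adjm_dims[simp]: "dim_row (adjm A) = dim_col A" "dim_col (adjm A) = dim_row A"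
  by (auto simp: adjm_def)

lemma adjm_carrier[simp]: "A \<in> carrier_mat n m \<Longrightarrow> adjm A \<in> carrier_mat m n"
  by (auto simp: adjm_def)

lemma adjm_index[simp]: "i < dim_col A \<Longrightarrow> j < dim_row A \<Longrightarrow> adjm A $$ (i,j) = cnj (A $$ (j,i))"
  by (auto simp: adjm_def)

lemma adjm_adjm[simp]: "adjm (adjm A) = A"
  by (rule eq_matI) auto

lemma index_mult_mat_sum:
  assumes "i < dim_row A" "j < dim_col B" "dim_col A = dim_row B"
  shows "(A * B) $$ (i,j) = (\<Sum>k<dim_row B. A $$ (i,k) * B $$ (k,j))"
  using assms by (simp add: index_mult_mat scalar_prod_def atLeast0LessThan)

lemma adjm_mult:
  assumes A: "A \<in> carrier_mat n m" and B: "B \<in> carrier_mat m p"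
  shows "adjm (A * B) = adjm B * adjm A"
proof (rule eq_matI)
  fix i j assume "i < dim_row (adjm B * adjm A)" "j < dim_col (adjm B * adjm A)"
  hence i: "i < p" and j: "j < n" using A B by auto
  have "adjm (A * B) $$ (i, j) = cnj ((A * B) $$ (j, i))" using i j A B by simp
  also have "(A * B) $$ (j, i) = (\<Sum>k<m. A $$ (j,k) * B $$ (k,i))"
    using i j A B by (subst index_mult_mat_sum) auto
  also have "(adjm B * adjm A) $$ (i, j) = (\<Sum>k<m. adjm B $$ (i,k) * adjm A $$ (k,j))"
    using i j A B by (subst index_mult_mat_sum) auto
  ultimately show "adjm (A * B) $$ (i, j) = (adjm B * adjm A) $$ (i, j)"
    using i j A B by (simp add: mult.commute)
qed (use A B in auto)

definition unitary :: "nat \<Rightarrow> complex mat \<Rightarrow> bool" where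
  "unitary n U \<longleftrightarrow> U \<in> carrier_mat n n \<and> adjm U * U = 1\<^sub>m n"

lemma unitary_right_inverse: "unitary n U \<Longrightarrow> U * adjm U = 1\<^sub>m n"
  unfolding unitary_def by (metis adjm_carrier mat_mult_left_right_inverse)

lemma unitary_mult:
  assumes V: "unitary n V" and W: "unitary n W"
  shows "unitary n (V * W)"
proof -
  have Vc: "V \<in> carrier_mat n n" and Wc: "W \<in> carrier_mat n n"
    using V W by (auto simp: unitary_def)
  have "adjm (V * W) * (V * W) = adjm W * (adjm V * V) * W"
    using Vc Wc by (simp add: adjm_mult[OF Vc Wc] assoc_mult_mat[of _ n n _ n _ n]
        mult_carrier_mat[of _ n n _ n])
  also have "\<dots> = 1\<^sub>m n" using V W Wc by (simp add: unitary_def)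
  finally show ?thesis using Vc Wc unfolding unitary_def by auto
qed

lemma unitary_conj_cancel:
  assumes W: "unitary n W" and A: "A \<in> carrier_mat n n"
  shows "W * (adjm W * A * W) * adjm W = A"
proof -
  have Wc: "W \<in> carrier_mat n n" using W by (simp add: unitary_def)
  have "W * (adjm W * A * W) * adjm W = (W * adjm W) * A * (W * adjm W)"
    using Wc A by (simp add: assoc_mult_mat[of _ n n _ n _ n] mult_carrier_mat[of _ n n _ n]
        adjm_carrier[OF Wc])
  thus ?thesis using unitary_right_inverse[OF W] A by simp
qed

definition diagm :: "complex list \<Rightarrow> complex mat" where
  "diagm es = mat (length es) (length es) (\<lambda>(i,j). if i = j then es ! i else 0)"

lemma diagm_carrier[simp]: "diagm es \<in> carrier_mat (length es) (length es)"
  by (simp add: diagm_def)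

text \<open>The matrix with corner entry c, zeros in the rest of the first row and column, and the
  block M below right.  Matrices of this shape carry the induction in the spectral theorem.\<close>
definition bordered :: "complex \<Rightarrow> complex mat \<Rightarrow> complex mat" where
  "bordered c M = mat (Suc (dim_row M)) (Suc (dim_col M))
     (\<lambda>(i,j). if i = 0 \<and> j = 0 then c else if i = 0 \<or> j = 0 then 0 else M $$ (i - 1, j - 1))"

lemma bordered_dims[simp]:
  "dim_row (bordered c M) = Suc (dim_row M)" "dim_col (bordered c M) = Suc (dim_col M)"
  by (auto simp: bordered_def)

lemma bordered_carrier[simp]: "M \<in> carrier_mat n m \<Longrightarrow> bordered c M \<in> carrier_mat (Suc n) (Suc m)"
  by (auto simp: bordered_def)

lemma bordered_index[simp]:
  "bordered c M $$ (0, 0) = c"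
  "j < dim_col M \<Longrightarrow> bordered c M $$ (0, Suc j) = 0"
  "i < dim_row M \<Longrightarrow> bordered c M $$ (Suc i, 0) = 0"
  "i < dim_row M \<Longrightarrow> j < dim_col M \<Longrightarrow> bordered c M $$ (Suc i, Suc j) = M $$ (i, j)"
  by (auto simp: bordered_def)

lemma bordered_mult:
  assumes A: "A \<in> carrier_mat n m" and B: "B \<in> carrier_mat m p"
  shows "bordered a A * bordered b B = bordered (a * b) (A * B)"
proof (rule eq_matI)
  fix i j assume "i < dim_row (bordered (a * b) (A * B))" "j < dim_col (bordered (a * b) (A * B))"
  hence i: "i < Suc n" and j: "j < Suc p" using A B by auto
  have "(bordered a A * bordered b B) $$ (i,j)
      = (\<Sum>k<Suc m. bordered a A $$ (i,k) * bordered b B $$ (k,j))"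
    using A B i j by (subst index_mult_mat_sum) auto
  also have "\<dots> = bordered a A $$ (i,0) * bordered b B $$ (0,j)
      + (\<Sum>k<m. bordered a A $$ (i,Suc k) * bordered b B $$ (Suc k,j))"
    by (rule sum.lessThan_Suc_shift)
  also have "\<dots> = bordered (a * b) (A * B) $$ (i,j)"
  proof (cases "i = 0 \<or> j = 0")
    case True
    have "(\<Sum>k<m. bordered a A $$ (i,Suc k) * bordered b B $$ (Suc k,j)) = 0"
      using True A B i j by (intro sum.neutral) auto
    thus ?thesis using True A B i j by (cases i; cases j) auto
  next
    case False
    then obtain i' j' where ij: "i = Suc i'" "j = Suc j'" by (meson not0_implies_Suc)
    have "(\<Sum>k<m. bordered a A $$ (i,Suc k) * bordered b B $$ (Suc k,j))
        = (\<Sum>k<m. A $$ (i',k) * B $$ (k,j'))"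
      using A B i j ij by (intro sum.cong refl) auto
    also have "\<dots> = (A * B) $$ (i',j')" using A B i j ij by (subst index_mult_mat_sum) auto
    finally show ?thesis using A B i j ij by auto
  qed
  finally show "(bordered a A * bordered b B) $$ (i,j) = bordered (a * b) (A * B) $$ (i,j)" .
qed (use A B in auto)

lemma adjm_bordered: "adjm (bordered c M) = bordered (cnj c) (adjm M)"
proof (rule eq_matI)
  fix i j assume "i < dim_row (bordered (cnj c) (adjm M))" "j < dim_col (bordered (cnj c) (adjm M))"
  hence "i < Suc (dim_col M)" and "j < Suc (dim_row M)" by auto
  thus "adjm (bordered c M) $$ (i,j) = bordered (cnj c) (adjm M) $$ (i,j)"
    by (cases i; cases j) auto
qed auto

lemma bordered_one: "bordered 1 (1\<^sub>m m) = 1\<^sub>m (Suc m)"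
proof (rule eq_matI)
  fix i j assume "i < dim_row (1\<^sub>m (Suc m))" "j < dim_col (1\<^sub>m (Suc m))"
  thus "bordered 1 (1\<^sub>m m) $$ (i,j) = 1\<^sub>m (Suc m) $$ (i,j)"
    by (cases i; cases j) auto
qed auto

lemma diagm_Cons: "diagm (e # es) = bordered e (diagm es)"
proof (rule eq_matI)
  fix i j assume "i < dim_row (bordered e (diagm es))" "j < dim_col (bordered e (diagm es))"
  hence "i < Suc (length es)" and "j < Suc (length es)" by (auto simp: diagm_def)
  thus "diagm (e # es) $$ (i,j) = bordered e (diagm es) $$ (i,j)"
    by (cases i; cases j) (auto simp: diagm_def)
qed (auto simp: diagm_def)

lemma unitary_bordered: "unitary m U \<Longrightarrow> unitary (Suc m) (bordered 1 U)"
  unfolding unitary_def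
  by (auto simp: adjm_bordered bordered_mult[of _ m m _ m] bordered_one)

lemma cscalar_prod_self:
  fixes w :: "complex vec"
  shows "w \<bullet>c w = complex_of_real (\<Sum>k<dim_vec w. (cmod (w $ k))^2)"
proof -
  have "w \<bullet>c w = (\<Sum>k<dim_vec w. w $ k * cnj (w $ k))"
    unfolding scalar_prod_def by (simp add: atLeast0LessThan)
  also have "\<dots> = (\<Sum>k<dim_vec w. complex_of_real ((cmod (w $ k))^2))"
    by (rule sum.cong[OF refl]) (rule complex_norm_square[symmetric])
  finally show ?thesis by simp
qed

lemma unitary_of_corthogonal:
  assumes ws: "set ws \<subseteq> carrier_vec n" and orth: "corthogonal ws" and len: "length ws = n"
  shows "\<exists>W. unitary n W \<and> (\<forall>j<n. \<exists>c. \<forall>i<n. W $$ (i,j) = c * ws ! j $ i)"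
proof -
  have wsc: "\<And>j. j < n \<Longrightarrow> ws ! j \<in> carrier_vec n" using ws len by auto
  define r where "r j = (\<Sum>k<n. (cmod (ws ! j $ k))^2)" for j
  have rw: "\<And>j. j < n \<Longrightarrow> ws ! j \<bullet>c ws ! j = complex_of_real (r j)"
    unfolding r_def using wsc cscalar_prod_self by (metis carrier_vecD)
  have rpos: "r j > 0" if j: "j < n" for j
  proof -
    have "ws ! j \<bullet>c ws ! j \<noteq> 0" using corthogonalD[OF orth] j len by auto
    hence "r j \<noteq> 0" using rw[OF j] by auto
    moreover have "r j \<ge> 0" unfolding r_def by (intro sum_nonneg) auto
    ultimately show "r j > 0" by auto
  qed
  define sc where "sc j = complex_of_real (1 / sqrt (r j))" for j
  define W where "W = mat n n (\<lambda>(i,j). sc j * ws ! j $ i)"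
  have Wc: "W \<in> carrier_mat n n" unfolding W_def by auto
  have "adjm W * W = 1\<^sub>m n"
  proof (rule eq_matI)
    fix i j assume "i < dim_row (1\<^sub>m n)" "j < dim_col (1\<^sub>m n)"
    hence i: "i < n" and j: "j < n" by auto
    have "(adjm W * W) $$ (i,j) = (\<Sum>k<n. cnj (sc i * ws ! i $ k) * (sc j * ws ! j $ k))"
      using i j Wc by (simp add: index_mult_mat_sum W_def del: index_mult_mat)
    also have "\<dots> = cnj (sc i) * sc j * (ws ! j \<bullet>c ws ! i)"
      using wsc[OF i] wsc[OF j]
      unfolding scalar_prod_def atLeast0LessThan sum_distrib_left
      by (intro sum.cong refl) (auto simp: mult.commute mult.left_commute)
    also have "\<dots> = 1\<^sub>m n $$ (i,j)"
    proof (cases "i = j")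
      case True
      have e1: "cnj (sc j) * sc j * complex_of_real (r j)
          = complex_of_real ((1 / sqrt (r j)) * (1 / sqrt (r j)) * r j)"
        unfolding sc_def by (simp only: complex_cnj_complex_of_real of_real_mult)
      have e2: "(1 / sqrt (r j)) * (1 / sqrt (r j)) * r j = 1"
        using rpos[OF j] by (simp add: field_simps flip: power2_eq_square)
      show ?thesis using True rw[OF j] i e1 e2 by simp
    next
      case False
      have "ws ! j \<bullet>c ws ! i = 0" using corthogonalD[OF orth] i j len False by auto
      thus ?thesis using False i j by simp
    qed
    finally show "(adjm W * W) $$ (i,j) = 1\<^sub>m n $$ (i,j)" .
  qed (use Wc in auto)
  moreover have "\<forall>j<n. \<exists>c. \<forall>i<n. W $$ (i,j) = c * ws ! j $ i" by (auto simp: W_def)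
  ultimately show ?thesis using Wc unfolding unitary_def by blast
qed

text \<open>Every nonzero vector is, up to a scalar, the first column of a unitary matrix (basis
  completion followed by Gram--Schmidt orthogonalisation).\<close>
lemma unitary_with_first_column:
  fixes v :: "complex vec"
  assumes v: "v \<in> carrier_vec n" and v0: "v \<noteq> 0\<^sub>v n"
  shows "\<exists>W c. unitary n W \<and> (\<forall>i<n. W $$ (i,0) = c * v $ i)"
proof -
  interpret cof_vec_space n "TYPE(complex)" .
  define b where "b = basis_completion v"
  from basis_completion[OF v v0, folded b_def]
  have dist_b: "distinct b" and indep: "\<not> lin_dep (set b)" and b: "set b \<subseteq> carrier_vec n"
    and hdb: "hd b = v" and len_b: "length b = n" by auto
  have n: "n \<noteq> 0" using v0 v by (metis carrier_vecD eq_vecI index_zero_vec(2) less_nat_zero_code)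
  from hdb len_b n obtain vs where bv: "b = v # vs" by (cases b, auto)
  define ws where "ws = gram_schmidt n b"
  from gram_schmidt_result[OF b dist_b indep ws_def]
  have ws: "set ws \<subseteq> carrier_vec n" "corthogonal ws" "length ws = n"
    by (auto simp: len_b)
  from gram_schmidt_hd[OF v, of vs, folded bv] have "hd ws = v" unfolding ws_def .
  hence wsv: "ws ! 0 = v" using ws(3) n by (metis hd_conv_nth list.size(3))
  obtain W where W: "unitary n W" and cols: "\<forall>j<n. \<exists>c. \<forall>i<n. W $$ (i,j) = c * ws ! j $ i"
    using unitary_of_corthogonal[OF ws] by blast
  then obtain c where "\<forall>i<n. W $$ (i,0) = c * ws ! 0 $ i" using n by blast
  thus ?thesis using W wsv by blast
qed

lemma unitary_eigen_first_column:
  assumes A: "A \<in> carrier_mat n n" and W: "unitary n W" and v: "v \<in> carrier_vec n"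
    and Av: "A *\<^sub>v v = e \<cdot>\<^sub>v v" and W0: "\<forall>i<n. W $$ (i,0) = c * v $ i" and i: "i < n"
  shows "(adjm W * A * W) $$ (i,0) = (if i = 0 then e else 0)"
proof -
  have Wc: "W \<in> carrier_mat n n" and WW: "adjm W * W = 1\<^sub>m n" using W by (auto simp: unitary_def)
  have AW0: "(A * W) $$ (k,0) = e * W $$ (k,0)" if k: "k < n" for k
  proof -
    have "(A * W) $$ (k,0) = (\<Sum>l<n. A $$ (k,l) * W $$ (l,0))"
      using A Wc k by (subst index_mult_mat_sum) auto
    also have "\<dots> = c * (\<Sum>l<n. A $$ (k,l) * v $ l)"
      using W0 by (simp add: sum_distrib_left ac_simps)
    also have "(\<Sum>l<n. A $$ (k,l) * v $ l) = (A *\<^sub>v v) $ k"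
      using A v k by (simp add: mult_mat_vec_def scalar_prod_def atLeast0LessThan)
    also have "\<dots> = e * v $ k" using Av v k by simp
    finally show ?thesis using W0 k by simp
  qed
  have "adjm W * A * W = adjm W * (A * W)"
    using A Wc by (simp add: assoc_mult_mat[of _ n n _ n _ n])
  hence "(adjm W * A * W) $$ (i,0) = (\<Sum>k<n. adjm W $$ (i,k) * (A * W) $$ (k,0))"
    using A Wc i by (simp del: index_mult_mat) (subst index_mult_mat_sum, auto)
  also have "\<dots> = e * (\<Sum>k<n. adjm W $$ (i,k) * W $$ (k,0))"
    using AW0 by (simp add: sum_distrib_left mult.commute mult.left_commute)
  also have "(\<Sum>k<n. adjm W $$ (i,k) * W $$ (k,0)) = (adjm W * W) $$ (i,0)"
    using Wc i by (subst index_mult_mat_sum) auto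
  also have "\<dots> = (if i = 0 then 1 else 0)" using WW i by simp
  finally show ?thesis by simp
qed

lemma hermitian_bordered_form:
  assumes B: "B \<in> carrier_mat (Suc m) (Suc m)" and herm: "adjm B = B"
    and col: "\<forall>i<Suc m. B $$ (i,0) = (if i = 0 then e else 0)"
  shows "\<exists>B3. B3 \<in> carrier_mat m m \<and> adjm B3 = B3 \<and> B = bordered e B3"
proof -
  have row: "B $$ (0,j) = (if j = 0 then e else 0)" if j: "j < Suc m" for j
  proof -
    have "B $$ (0,j) = adjm B $$ (0,j)" using herm by simp
    also have "\<dots> = cnj (B $$ (j,0))" using B j by simp
    also have "\<dots> = (if j = 0 then cnj e else 0)" using col j by simp
    finally have "B $$ (0,j) = (if j = 0 then cnj e else 0)" .
    thus ?thesis using col by (cases "j = 0") auto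
  qed
  define B3 where "B3 = mat m m (\<lambda>(i,j). B $$ (Suc i, Suc j))"
  have B3c: "B3 \<in> carrier_mat m m" unfolding B3_def by auto
  have "B = bordered e B3"
  proof (rule eq_matI)
    fix i j assume "i < dim_row (bordered e B3)" "j < dim_col (bordered e B3)"
    hence i: "i < Suc m" and j: "j < Suc m" using B3c by auto
    show "B $$ (i,j) = bordered e B3 $$ (i,j)"
      using i j col row[OF j] B3c by (cases i; cases j) (auto simp: B3_def)
  qed (use B B3c in auto)
  moreover have "adjm B3 = B3"
  proof (rule eq_matI)
    fix i j assume "i < dim_row B3" "j < dim_col B3"
    hence i: "i < m" and j: "j < m" using B3c by auto
    have "B3 $$ (i,j) = adjm B $$ (Suc i, Suc j)" using herm i j by (simp add: B3_def)
    also have "\<dots> = cnj (B $$ (Suc j, Suc i))" using B i j by simp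
    finally show "adjm B3 $$ (i,j) = B3 $$ (i,j)" using i j by (simp add: B3_def)
  qed (use B3c in auto)
  ultimately show ?thesis using B3c by blast
qed

lemma hermitian_deflation:
  assumes A: "A \<in> carrier_mat (Suc m) (Suc m)" and herm: "adjm A = A"
  shows "\<exists>W e A3. unitary (Suc m) W \<and> A3 \<in> carrier_mat m m \<and> adjm A3 = A3 \<and>
           adjm W * A * W = bordered e A3"
proof -
  have "degree (char_poly A) = Suc m" using degree_monic_char_poly[OF A] by auto
  hence "\<not> constant (poly (char_poly A))" by (simp add: constant_degree)
  then obtain e where "poly (char_poly A) e = 0" using fundamental_theorem_of_algebra by blast
  hence "eigenvalue A e" using eigenvalue_root_char_poly[OF A] by simp
  then obtain v where "eigenvector A v e" unfolding eigenvalue_def by blast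
  hence v: "v \<in> carrier_vec (Suc m)" and v0: "v \<noteq> 0\<^sub>v (Suc m)" and Av: "A *\<^sub>v v = e \<cdot>\<^sub>v v"
    unfolding eigenvector_def using A by auto
  obtain W c where W: "unitary (Suc m) W" and W0: "\<forall>i<Suc m. W $$ (i,0) = c * v $ i"
    using unitary_with_first_column[OF v v0] by blast
  have Wc: "W \<in> carrier_mat (Suc m) (Suc m)" using W by (simp add: unitary_def)
  define A' where "A' = adjm W * A * W"
  have A'c: "A' \<in> carrier_mat (Suc m) (Suc m)" using A Wc unfolding A'_def by auto
  have "adjm A' = adjm W * adjm A * adjm (adjm W)"
    unfolding A'_def using A Wc
    by (simp add: adjm_mult[of _ "Suc m" "Suc m" _ "Suc m"]
        assoc_mult_mat[of _ "Suc m" "Suc m" _ "Suc m" _ "Suc m"])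
  hence hA': "adjm A' = A'" unfolding herm adjm_adjm A'_def .
  have "\<forall>i<Suc m. A' $$ (i,0) = (if i = 0 then e else 0)"
    unfolding A'_def using unitary_eigen_first_column[OF A W v Av W0] by blast
  then obtain A3 where "A3 \<in> carrier_mat m m" "adjm A3 = A3" "A' = bordered e A3"
    using hermitian_bordered_form[OF A'c hA'] by blast
  thus ?thesis using W unfolding A'_def by blast
qed

theorem hermitian_spectral:
  assumes "A \<in> carrier_mat n n" and "adjm A = A"
  shows "\<exists>U es. unitary n U \<and> length es = n \<and> A = U * diagm es * adjm U"
  using assms
proof (induction n arbitrary: A)
  case 0
  show ?case
    by (rule exI[of _ "1\<^sub>m 0"], rule exI[of _ "[]"])
       (use 0 in \<open>auto intro!: eq_matI simp: unitary_def\<close>)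
next
  case (Suc m A)
  obtain W e A3 where W: "unitary (Suc m) W" and A3: "A3 \<in> carrier_mat m m" "adjm A3 = A3"
    and defl: "adjm W * A * W = bordered e A3"
    using hermitian_deflation[OF Suc.prems] by blast
  obtain U3 es3 where U3: "unitary m U3" and les3: "length es3 = m"
    and A3d: "A3 = U3 * diagm es3 * adjm U3"
    using Suc.IH[OF A3] by blast
  define V where "V = bordered 1 U3"
  have U3c: "U3 \<in> carrier_mat m m" using U3 by (simp add: unitary_def)
  have D3: "diagm es3 \<in> carrier_mat m m" using diagm_carrier[of es3] les3 by simp
  have V: "unitary (Suc m) V" unfolding V_def by (rule unitary_bordered[OF U3])
  have Wc: "W \<in> carrier_mat (Suc m) (Suc m)" and Vc: "V \<in> carrier_mat (Suc m) (Suc m)"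
    using W V by (auto simp: unitary_def)
  have D: "diagm (e # es3) \<in> carrier_mat (Suc m) (Suc m)"
    using diagm_carrier[of "e # es3"] les3 by simp
  have "V * diagm (e # es3) * adjm V
      = bordered (1 * e) (U3 * diagm es3) * bordered (cnj 1) (adjm U3)"
    unfolding V_def diagm_Cons adjm_bordered bordered_mult[OF U3c D3] ..
  also have "\<dots> = bordered e A3"
    unfolding A3d bordered_mult[OF mult_carrier_mat[OF U3c D3] adjm_carrier[OF U3c]] by simp
  finally have inner: "bordered e A3 = V * diagm (e # es3) * adjm V" ..
  have "A = W * (adjm W * A * W) * adjm W" using unitary_conj_cancel[OF W Suc.prems(1)] by simp
  also have "\<dots> = W * (V * diagm (e # es3) * adjm V) * adjm W" unfolding defl inner ..
  also have "\<dots> = (W * V) * diagm (e # es3) * adjm (W * V)"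
    using Wc Vc D
    by (simp add: adjm_mult[OF Wc Vc] assoc_mult_mat[of _ "Suc m" "Suc m" _ "Suc m" _ "Suc m"]
        mult_carrier_mat[of _ "Suc m" "Suc m" _ "Suc m"] adjm_carrier[OF Wc] adjm_carrier[OF Vc])
  finally show ?case
    using unitary_mult[OF W V] les3 by (intro exI[of _ "W * V"] exI[of _ "e # es3"]) auto
qed

lemma sum_set_count_list:
  fixes f :: "'a \<Rightarrow> real"
  shows "(\<Sum>z\<in>set es. real (count_list es z) * f z) = sum_list (map f es)"
proof (induction es)
  case (Cons a es)
  show ?case
  proof (cases "a \<in> set es")
    case True
    have "(\<Sum>z\<in>set (a # es). real (count_list (a # es) z) * f z)
        = (\<Sum>z\<in>set es. real (count_list es z) * f z + (if z = a then f z else 0))"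
      using True by (intro sum.cong) (auto simp: insert_absorb algebra_simps)
    also have "\<dots> = sum_list (map f es) + f a"
      using True Cons by (simp add: sum.distrib sum.delta')
    finally show ?thesis by simp
  next
    case False
    have "(\<Sum>z\<in>set es. real (count_list (a # es) z) * f z) = (\<Sum>z\<in>set es. real (count_list es z) * f z)"
      using False by (intro sum.cong) auto
    thus ?thesis using False Cons by (simp add: count_list_0_iff)
  qed
qed simp

lemma tr_pow_unitary_diag:
  assumes U: "unitary n U" and les: "length es = n" and Ad: "A = U * diagm es * adjm U"
  shows "tr_pow a A = (\<Sum>i<n. (Re (es ! i)) powr a)"
proof -
  have Uc: "U \<in> carrier_mat n n" using U by (simp add: unitary_def)
  have D: "diagm es \<in> carrier_mat n n" using diagm_carrier[of es] les by simp
  have A: "A \<in> carrier_mat n n" using Ad Uc D by (metis adjm_carrier mult_carrier_mat)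
  have "similar_mat_wit A (diagm es) U (adjm U)"
    unfolding similar_mat_wit_def Let_def
    using A Uc D Ad U unitary_right_inverse[OF U] by (auto simp: unitary_def)
  hence "similar_mat A (diagm es)" unfolding similar_mat_def by blast
  hence cpA: "char_poly A = char_poly (diagm es)" by (rule char_poly_similar)
  have ut: "upper_triangular (diagm es)" unfolding upper_triangular_def diagm_def by auto
  have dg: "diag_mat (diagm es) = es"
    unfolding diag_mat_def diagm_def by (intro nth_equalityI) auto
  have cp: "char_poly A = (\<Prod>a\<leftarrow>es. [:- a, 1:])"
    using cpA char_poly_upper_triangular[OF D ut] dg by simp
  have ord: "Polynomial.order z (char_poly A) = count_list es z" for z
  proof -
    have "Polynomial.order z (char_poly A)
        = sum_list (map (Polynomial.order z) (map (\<lambda>a. [:- a, 1:]) es))"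
      unfolding cp by (subst order_prod_list) auto
    also have "\<dots> = count_list es z"
      by (induction es) (auto simp: order_linear')
    finally show ?thesis .
  qed
  have roots: "{z. poly (char_poly A) z = 0} = set es"
    unfolding cp by (induction es) (auto simp: poly_prod_list)
  have "tr_pow a A = (\<Sum>z\<in>set es. real (count_list es z) * (Re z) powr a)"
    unfolding tr_pow_def roots ord ..
  also have "\<dots> = sum_list (map (\<lambda>z. (Re z) powr a) es)"
    by (rule sum_set_count_list)
  also have "\<dots> = (\<Sum>i<n. (Re (es ! i)) powr a)"
    using les by (simp add: sum_list_sum_nth atLeast0LessThan)
  finally show ?thesis .
qed

section \<open>Index tuples and orthogonal projections\<close>

lemma tuples_alt: "tuples d n = {xs. set xs \<subseteq> {..<d} \<and> length xs = n}"
  unfolding tuples_def by auto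

lemma finite_tuples[simp]: "finite (tuples d n)"
  unfolding tuples_alt by (rule finite_lists_length_eq) auto

lemma tuples_0[simp]: "tuples d 0 = {[]}"
  unfolding tuples_def by auto

lemma length_tuples: "xs \<in> tuples d n \<Longrightarrow> length xs = n"
  unfolding tuples_def by auto

lemma append_tuples: "ys \<in> tuples d k \<Longrightarrow> z \<in> tuples d m \<Longrightarrow> ys @ z \<in> tuples d (k + m)"
  unfolding tuples_def by auto

lemma take_tuples: "xs \<in> tuples d n \<Longrightarrow> k \<le> n \<Longrightarrow> take k xs \<in> tuples d k"
  unfolding tuples_def by (auto dest: in_set_takeD)

lemma drop_tuples: "xs \<in> tuples d n \<Longrightarrow> k \<le> n \<Longrightarrow> drop k xs \<in> tuples d (n - k)"
  unfolding tuples_def by (auto dest: in_set_dropD)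

lemma sum_tuples_append:
  "(\<Sum>xs\<in>tuples d (k + m). f xs) = (\<Sum>ys\<in>tuples d k. \<Sum>z\<in>tuples d m. f (ys @ z))"
proof -
  have bij: "bij_betw (\<lambda>(ys, z). ys @ z) (tuples d k \<times> tuples d m) (tuples d (k + m))"
  proof (rule bij_betwI')
    fix x y assume "x \<in> tuples d k \<times> tuples d m" "y \<in> tuples d k \<times> tuples d m"
    then show "((case x of (ys, z) \<Rightarrow> ys @ z) = (case y of (ys, z) \<Rightarrow> ys @ z)) = (x = y)"
      by (cases x, cases y) (auto simp: tuples_def)
  next
    fix x assume "x \<in> tuples d k \<times> tuples d m"
    then show "(case x of (ys, z) \<Rightarrow> ys @ z) \<in> tuples d (k + m)"
      by (cases x) (auto simp: append_tuples)
  next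
    fix xs assume xs: "xs \<in> tuples d (k + m)"
    show "\<exists>x\<in>tuples d k \<times> tuples d m. xs = (case x of (ys, z) \<Rightarrow> ys @ z)"
      by (rule bexI[of _ "(take k xs, drop k xs)"])
         (use xs take_tuples[OF xs, of k] drop_tuples[OF xs, of k] in auto)
  qed
  have "(\<Sum>xs\<in>tuples d (k + m). f xs) = (\<Sum>(ys, z)\<in>tuples d k \<times> tuples d m. f (ys @ z))"
    using sum.reindex_bij_betw[OF bij, of f] by (simp add: case_prod_beta)
  also have "\<dots> = (\<Sum>ys\<in>tuples d k. \<Sum>z\<in>tuples d m. f (ys @ z))"
    by (rule sum.cartesian_product[symmetric])
  finally show ?thesis .
qed

lemma sum_tuples_split:
  assumes "k \<le> n"
  shows "(\<Sum>xs\<in>tuples d n. f xs) = (\<Sum>ys\<in>tuples d k. \<Sum>z\<in>tuples d (n - k). f (ys @ z))"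
  using sum_tuples_append[where d=d and k=k and m="n - k" and f=f] assms by simp

lemma dec_tuples: "0 < d \<Longrightarrow> i < d ^ k \<Longrightarrow> dec d k i \<in> tuples d k"
proof (induction k arbitrary: i)
  case 0 then show ?case by (simp add: tuples_def)
next
  case (Suc k)
  have "i div d ^ k < d" using Suc.prems by (simp add: less_mult_imp_div_less mult.commute)
  moreover have "i mod d ^ k < d ^ k" using Suc.prems by simp
  ultimately show ?case using Suc.IH[of "i mod d ^ k"] Suc.prems by (simp add: tuples_def)
qed

lemma dec_inj: "inj_on (dec d k) {..<d ^ k}"
proof (induction k)
  case 0 then show ?case by (simp add: inj_on_def)
next
  case (Suc k)
  show ?case
  proof (rule inj_onI)
    fix i j assume i: "i \<in> {..<d ^ Suc k}" and j: "j \<in> {..<d ^ Suc k}"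
      and e: "dec d (Suc k) i = dec d (Suc k) j"
    from e have 1: "i div d ^ k = j div d ^ k" and 2: "dec d k (i mod d ^ k) = dec d k (j mod d ^ k)"
      by auto
    have "d ^ k > 0" using i by (cases "d = 0") auto
    hence "i mod d ^ k = j mod d ^ k" using Suc.IH 2 by (auto simp: inj_on_def)
    with 1 show "i = j" by (metis div_mult_mod_eq)
  qed
qed

lemma dec_bij: "0 < d \<Longrightarrow> bij_betw (dec d k) {..<d ^ k} (tuples d k)"
proof -
  assume d: "0 < d"
  have sub: "dec d k ` {..<d ^ k} \<subseteq> tuples d k" using dec_tuples[OF d] by auto
  have "card (dec d k ` {..<d ^ k}) = d ^ k" using card_image[OF dec_inj] by simp
  moreover have "card (tuples d k) = d ^ k" unfolding tuples_alt by (subst card_lists_length_eq) auto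
  ultimately have "dec d k ` {..<d ^ k} = tuples d k"
    using sub by (intro card_subset_eq) auto
  thus ?thesis using dec_inj unfolding bij_betw_def by auto
qed

lemma sum_tuples_dec: "0 < d \<Longrightarrow> (\<Sum>ys\<in>tuples d k. g ys) = (\<Sum>i<d ^ k. g (dec d k i))"
  using sum.reindex_bij_betw[OF dec_bij, of d g k] by simp

lemma normalized_imp_pos_dim: "normalized d N psi \<Longrightarrow> 0 < N \<Longrightarrow> 0 < d"
proof (rule ccontr)
  assume "normalized d N psi" "0 < N" "\<not> 0 < d"
  hence "tuples d N = {}"
    unfolding tuples_def
    by (auto simp: length_greater_0_conv[symmetric] simp del: length_greater_0_conv dest!: nth_mem)
  thus False using \<open>normalized d N psi\<close> unfolding normalized_def by simp
qed

definition ip :: "'b set \<Rightarrow> ('b \<Rightarrow> complex) \<Rightarrow> ('b \<Rightarrow> complex) \<Rightarrow> complex" where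
  "ip S f g = (\<Sum>y\<in>S. cnj (f y) * g y)"

definition nrm :: "'b set \<Rightarrow> ('b \<Rightarrow> complex) \<Rightarrow> real" where
  "nrm S f = (\<Sum>y\<in>S. (cmod (f y))^2)"

definition orthonormal :: "'b set \<Rightarrow> nat \<Rightarrow> (nat \<Rightarrow> 'b \<Rightarrow> complex) \<Rightarrow> bool" where
  "orthonormal S m u \<longleftrightarrow> (\<forall>a<m. \<forall>b<m. ip S (u a) (u b) = (if a = b then 1 else 0))"

definition proj :: "'b set \<Rightarrow> nat \<Rightarrow> (nat \<Rightarrow> 'b \<Rightarrow> complex) \<Rightarrow> ('b \<Rightarrow> complex) \<Rightarrow> 'b \<Rightarrow> complex" where
  "proj S m u f = (\<lambda>y. \<Sum>a<m. u a y * ip S (u a) f)"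

lemma nrm_ip: "complex_of_real (nrm S f) = ip S f f"
  unfolding nrm_def ip_def of_real_sum
  by (intro sum.cong refl) (metis complex_norm_square mult.commute)

lemma nrm_nonneg: "finite S \<Longrightarrow> 0 \<le> nrm S f"
  unfolding nrm_def by (intro sum_nonneg) auto

lemma nrm_cong: "(\<And>y. y \<in> S \<Longrightarrow> f y = g y) \<Longrightarrow> nrm S f = nrm S g"
  unfolding nrm_def by (intro sum.cong refl) auto

lemma ip_cnj: "ip S g f = cnj (ip S f g)"
  unfolding ip_def by (simp add: mult.commute)

lemma ip_add_right: "ip S f (\<lambda>y. g y + h y) = ip S f g + ip S f h"
  unfolding ip_def by (simp add: distrib_left sum.distrib)

lemma ip_add_left: "ip S (\<lambda>y. g y + h y) f = ip S g f + ip S h f"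
  unfolding ip_def by (simp add: distrib_right sum.distrib)

lemma ip_diff_right: "ip S f (\<lambda>y. g y - h y) = ip S f g - ip S f h"
  unfolding ip_def by (simp add: right_diff_distrib sum_subtractf)

lemma ip_sum_right: "ip S f (\<lambda>y. \<Sum>a<m. c a * v a y) = (\<Sum>a<m. c a * ip S f (v a))"
proof -
  have "ip S f (\<lambda>y. \<Sum>a<m. c a * v a y) = (\<Sum>y\<in>S. \<Sum>a<m. c a * (cnj (f y) * v a y))"
    unfolding ip_def by (simp add: sum_distrib_left mult_ac)
  also have "\<dots> = (\<Sum>a<m. \<Sum>y\<in>S. c a * (cnj (f y) * v a y))" by (rule sum.swap)
  also have "\<dots> = (\<Sum>a<m. c a * ip S f (v a))" unfolding ip_def by (simp add: sum_distrib_left)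
  finally show ?thesis .
qed

lemma ip_sum_left: "ip S (\<lambda>y. \<Sum>a<m. v a y * c a) f = (\<Sum>a<m. cnj (c a) * ip S (v a) f)"
proof -
  have "ip S (\<lambda>y. \<Sum>a<m. v a y * c a) f = (\<Sum>y\<in>S. \<Sum>a<m. cnj (c a) * (cnj (v a y) * f y))"
    unfolding ip_def cnj_sum complex_cnj_mult sum_distrib_right
    by (intro sum.cong refl) (simp add: mult_ac)
  also have "\<dots> = (\<Sum>a<m. \<Sum>y\<in>S. cnj (c a) * (cnj (v a y) * f y))" by (rule sum.swap)
  also have "\<dots> = (\<Sum>a<m. cnj (c a) * ip S (v a) f)" unfolding ip_def by (simp add: sum_distrib_left)
  finally show ?thesis .
qed

lemma pythagoras:
  assumes "ip S p q = 0"
  shows "nrm S (\<lambda>y. p y + q y) = nrm S p + nrm S q"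
proof -
  have "ip S q p = 0" using assms ip_cnj[of S q p] by simp
  hence "complex_of_real (nrm S (\<lambda>y. p y + q y)) = complex_of_real (nrm S p + nrm S q)"
    unfolding of_real_add nrm_ip using assms by (simp add: ip_add_right ip_add_left)
  thus ?thesis using of_real_eq_iff by blast
qed

lemma ip_proj:
  assumes on: "orthonormal S m u" and b: "b < m"
  shows "ip S (u b) (proj S m u f) = ip S (u b) f"
proof -
  have "ip S (u b) (proj S m u f) = ip S (u b) (\<lambda>y. \<Sum>a<m. ip S (u a) f * u a y)"
    unfolding proj_def by (simp add: mult.commute)
  also have "\<dots> = (\<Sum>a<m. ip S (u a) f * ip S (u b) (u a))" by (rule ip_sum_right)
  also have "\<dots> = (\<Sum>a<m. if a = b then ip S (u a) f else 0)"
    using on b unfolding orthonormal_def by (intro sum.cong refl) auto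
  also have "\<dots> = ip S (u b) f" using b by (simp add: sum.delta')
  finally show ?thesis .
qed

lemma ip_proj_left: "ip S (proj S m u h) g = (\<Sum>a<m. cnj (ip S (u a) h) * ip S (u a) g)"
  unfolding proj_def by (rule ip_sum_left)

lemma proj_orth:
  assumes on: "orthonormal S m u"
  shows "ip S (proj S m u h) (\<lambda>y. f y - proj S m u f y) = 0"
proof -
  have "ip S (u a) (\<lambda>y. f y - proj S m u f y) = 0" if "a < m" for a
    using ip_proj[OF on that] by (simp add: ip_diff_right)
  thus ?thesis unfolding ip_proj_left by simp
qed

lemma proj_diff: "proj S m u f y - proj S m u g y = proj S m u (\<lambda>y. f y - g y) y"
  unfolding proj_def by (simp add: ip_diff_right right_diff_distrib sum_subtractf)

lemma proj_pythagoras: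
  assumes on: "orthonormal S m u"
  shows "nrm S f = nrm S (proj S m u f) + nrm S (\<lambda>y. f y - proj S m u f y)"
proof -
  have "nrm S f = nrm S (\<lambda>y. proj S m u f y + (f y - proj S m u f y))" by simp
  also have "\<dots> = nrm S (proj S m u f) + nrm S (\<lambda>y. f y - proj S m u f y)"
    by (rule pythagoras[OF proj_orth[OF on]])
  finally show ?thesis .
qed

lemma proj_error_split:
  assumes on: "orthonormal S m u"
  shows "nrm S (\<lambda>y. f y - proj S m u g y)
       = nrm S (\<lambda>y. f y - proj S m u f y) + nrm S (proj S m u (\<lambda>y. f y - g y))"
proof -
  have eq: "(\<lambda>y. f y - proj S m u g y)
      = (\<lambda>y. (f y - proj S m u f y) + proj S m u (\<lambda>y. f y - g y) y)"
    using proj_diff[of S m u f _ g] by (auto simp: fun_eq_iff algebra_simps)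
  have "ip S (\<lambda>y. f y - proj S m u f y) (proj S m u (\<lambda>y. f y - g y)) = 0"
    using proj_orth[OF on, of "\<lambda>y. f y - g y" f] ip_cnj by (metis complex_cnj_zero)
  thus ?thesis unfolding eq by (rule pythagoras)
qed

lemma nrm_proj:
  assumes on: "orthonormal S m u"
  shows "nrm S (proj S m u f) = (\<Sum>a<m. (cmod (ip S (u a) f))^2)"
proof -
  have "complex_of_real (nrm S (proj S m u f))
      = (\<Sum>a<m. cnj (ip S (u a) f) * ip S (u a) (proj S m u f))"
    unfolding nrm_ip ip_proj_left ..
  also have "\<dots> = (\<Sum>a<m. cnj (ip S (u a) f) * ip S (u a) f)"
    using ip_proj[OF on] by (intro sum.cong refl) auto
  also have "\<dots> = complex_of_real (\<Sum>a<m. (cmod (ip S (u a) f))^2)"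
    unfolding of_real_sum by (intro sum.cong refl) (metis complex_norm_square mult.commute)
  finally show ?thesis using of_real_eq_iff by blast
qed

text \<open>The projection acting on the first k sites of a chain state (the projector
  P \<otimes> 1 on the bipartition after site k), where P projects onto the span of the u a.\<close>
definition cut_proj :: "nat \<Rightarrow> nat \<Rightarrow> nat \<Rightarrow> (nat \<Rightarrow> nat list \<Rightarrow> complex) \<Rightarrow>
    (nat list \<Rightarrow> complex) \<Rightarrow> nat list \<Rightarrow> complex" where
  "cut_proj d k m u f xs = (\<Sum>a<m. u a (take k xs) * ip (tuples d k) (u a) (\<lambda>y. f (y @ drop k xs)))"

lemma cut_proj_append:
  assumes "ys \<in> tuples d k"
  shows "cut_proj d k m u f (ys @ z) = proj (tuples d k) m u (\<lambda>y. f (y @ z)) ys"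
  using length_tuples[OF assms] unfolding cut_proj_def proj_def by simp

lemma nrm_split:
  assumes "k \<le> n"
  shows "nrm (tuples d n) F = (\<Sum>z\<in>tuples d (n - k). nrm (tuples d k) (\<lambda>y. F (y @ z)))"
  unfolding nrm_def sum_tuples_split[OF assms, where d=d and f="\<lambda>xs. (cmod (F xs))^2"]
  by (rule sum.swap)

lemma cut_proj_error_split:
  assumes on: "orthonormal (tuples d k) m u" and kn: "k \<le> n"
  shows "nrm (tuples d n) (\<lambda>xs. f xs - cut_proj d k m u g xs)
       = nrm (tuples d n) (\<lambda>xs. f xs - cut_proj d k m u f xs)
         + nrm (tuples d n) (cut_proj d k m u (\<lambda>xs. f xs - g xs))"
proof -
  let ?S = "tuples d k" and ?T = "tuples d (n - k)"
  have e1: "nrm (tuples d n) (\<lambda>xs. f xs - cut_proj d k m u g xs)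
      = (\<Sum>z\<in>?T. nrm ?S (\<lambda>y. f (y @ z) - proj ?S m u (\<lambda>y. g (y @ z)) y))"
    unfolding nrm_split[OF kn, where d=d and F="\<lambda>xs. f xs - cut_proj d k m u g xs"]
    by (intro sum.cong refl nrm_cong) (simp add: cut_proj_append)
  have e2: "nrm (tuples d n) (\<lambda>xs. f xs - cut_proj d k m u f xs)
      = (\<Sum>z\<in>?T. nrm ?S (\<lambda>y. f (y @ z) - proj ?S m u (\<lambda>y. f (y @ z)) y))"
    unfolding nrm_split[OF kn, where d=d and F="\<lambda>xs. f xs - cut_proj d k m u f xs"]
    by (intro sum.cong refl nrm_cong) (simp add: cut_proj_append)
  have e3: "nrm (tuples d n) (cut_proj d k m u (\<lambda>xs. f xs - g xs))
      = (\<Sum>z\<in>?T. nrm ?S (proj ?S m u (\<lambda>y. f (y @ z) - g (y @ z))))"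
    unfolding nrm_split[OF kn, where d=d and F="cut_proj d k m u (\<lambda>xs. f xs - g xs)"]
    by (intro sum.cong refl nrm_cong) (simp add: cut_proj_append)
  have e4: "nrm ?S (\<lambda>y. f (y @ z) - proj ?S m u (\<lambda>y. g (y @ z)) y)
      = nrm ?S (\<lambda>y. f (y @ z) - proj ?S m u (\<lambda>y. f (y @ z)) y)
        + nrm ?S (proj ?S m u (\<lambda>y. f (y @ z) - g (y @ z)))" for z
    by (rule proj_error_split[OF on])
  show ?thesis unfolding e1 e2 e3 e4 sum.distrib ..
qed

lemma cut_proj_contraction:
  assumes on: "orthonormal (tuples d k) m u" and kn: "k \<le> n"
  shows "nrm (tuples d n) (cut_proj d k m u h) \<le> nrm (tuples d n) h"
proof -
  let ?S = "tuples d k" and ?T = "tuples d (n - k)"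
  have "nrm (tuples d n) (cut_proj d k m u h) = (\<Sum>z\<in>?T. nrm ?S (proj ?S m u (\<lambda>y. h (y @ z))))"
    unfolding nrm_split[OF kn, where d=d and F="cut_proj d k m u h"]
    by (intro sum.cong refl nrm_cong) (simp add: cut_proj_append)
  also have "\<dots> \<le> (\<Sum>z\<in>?T. nrm ?S (\<lambda>y. h (y @ z)))"
  proof (rule sum_mono)
    fix z
    show "nrm ?S (proj ?S m u (\<lambda>y. h (y @ z))) \<le> nrm ?S (\<lambda>y. h (y @ z))"
      using proj_pythagoras[OF on, of "\<lambda>y. h (y @ z)"]
        nrm_nonneg[of ?S "\<lambda>y. h (y @ z) - proj ?S m u (\<lambda>y. h (y @ z)) y"] by simp
  qed
  also have "\<dots> = nrm (tuples d n) h" by (rule nrm_split[OF kn, symmetric])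
  finally show ?thesis .
qed

lemma cut_proj_error:
  assumes on: "orthonormal (tuples d k) m u" and kn: "k \<le> n"
  shows "nrm (tuples d n) (\<lambda>xs. f xs - cut_proj d k m u f xs)
      = nrm (tuples d n) f
        - (\<Sum>a<m. \<Sum>z\<in>tuples d (n - k). (cmod (ip (tuples d k) (u a) (\<lambda>y. f (y @ z))))^2)"
proof -
  let ?S = "tuples d k" and ?T = "tuples d (n - k)"
  let ?w = "\<lambda>z. \<Sum>a<m. (cmod (ip ?S (u a) (\<lambda>y. f (y @ z))))^2"
  have "nrm (tuples d n) (\<lambda>xs. f xs - cut_proj d k m u f xs)
      = (\<Sum>z\<in>?T. nrm ?S (\<lambda>y. f (y @ z) - proj ?S m u (\<lambda>y. f (y @ z)) y))"
    unfolding nrm_split[OF kn, where d=d and F="\<lambda>xs. f xs - cut_proj d k m u f xs"]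
    by (intro sum.cong refl nrm_cong) (simp add: cut_proj_append)
  also have "\<dots> = (\<Sum>z\<in>?T. nrm ?S (\<lambda>y. f (y @ z)) - ?w z)"
  proof (rule sum.cong[OF refl])
    fix z
    show "nrm ?S (\<lambda>y. f (y @ z) - proj ?S m u (\<lambda>y. f (y @ z)) y) = nrm ?S (\<lambda>y. f (y @ z)) - ?w z"
      using proj_pythagoras[OF on, of "\<lambda>y. f (y @ z)"] nrm_proj[OF on, of "\<lambda>y. f (y @ z)"]
      by linarith
  qed
  also have "\<dots> = (\<Sum>z\<in>?T. nrm ?S (\<lambda>y. f (y @ z))) - (\<Sum>z\<in>?T. ?w z)"
    by (rule sum_subtractf)
  also have "(\<Sum>z\<in>?T. ?w z) = (\<Sum>a<m. \<Sum>z\<in>?T. (cmod (ip ?S (u a) (\<lambda>y. f (y @ z))))^2)"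
    by (rule sum.swap)
  also have "(\<Sum>z\<in>?T. nrm ?S (\<lambda>y. f (y @ z))) = nrm (tuples d n) f"
    by (rule nrm_split[OF kn, symmetric])
  finally show ?thesis .
qed

section \<open>Sequential truncation and its matrix product form\<close>

text \<open>Sequential truncation: starting from psi, apply the cut projections for the cuts
  N-1, N-2, ..., j in turn (the projection for cut j acts last).  For j = 1 this is the
  approximating matrix product state.\<close>
function trunc_state :: "nat \<Rightarrow> nat \<Rightarrow> (nat \<Rightarrow> nat) \<Rightarrow> (nat \<Rightarrow> nat \<Rightarrow> nat list \<Rightarrow> complex) \<Rightarrow>
    (nat list \<Rightarrow> complex) \<Rightarrow> nat \<Rightarrow> nat list \<Rightarrow> complex" where
  "trunc_state d N mm u psi j =
     (if j < N then cut_proj d j (mm j) (u j) (trunc_state d N mm u psi (Suc j)) else psi)"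
  by pat_completeness auto
termination by (relation "measure (\<lambda>(d, N, mm, u, psi, j). N - j)") auto

declare trunc_state.simps[simp del]

lemma trunc_state_final: "N \<le> j \<Longrightarrow> trunc_state d N mm u psi j = psi"
  by (subst trunc_state.simps) simp

lemma trunc_state_step:
  "j < N \<Longrightarrow> trunc_state d N mm u psi j = cut_proj d j (mm j) (u j) (trunc_state d N mm u psi (Suc j))"
  by (subst trunc_state.simps) simp

text \<open>The MPS tensors of the truncated state: the overlap of the kept vector b at cut k-1,
  extended by the physical index x at site k, with the kept vector a at cut k.\<close>
definition mps_tensor :: "nat \<Rightarrow> (nat \<Rightarrow> nat) \<Rightarrow> (nat \<Rightarrow> nat \<Rightarrow> nat list \<Rightarrow> complex) \<Rightarrow>
    nat \<Rightarrow> nat \<Rightarrow> complex mat" where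
  "mps_tensor d mm u k x = mat (mm (k - 1)) (mm k)
     (\<lambda>(b, a). \<Sum>y\<in>tuples d (k - 1). cnj (u (k - 1) b y) * u k a (y @ [x]))"

lemma mps_tensor_dims[simp]:
  "dim_row (mps_tensor d mm u k x) = mm (k - 1)" "dim_col (mps_tensor d mm u k x) = mm k"
  unfolding mps_tensor_def by simp_all

lemma mps_tensor_carrier: "mps_tensor d mm u k x \<in> carrier_mat (mm (k - 1)) (mm k)"
  by (simp add: carrier_matI)

lemma trunc_state_transfer:
  assumes jN: "j < N" and j1: "1 \<le> j" and b: "b < mm (j - 1)"
  shows "(\<Sum>y\<in>tuples d (j - 1). cnj (u (j - 1) b y) * trunc_state d N mm u psi j (y @ x # z))
       = (\<Sum>c<mm j. mps_tensor d mm u j x $$ (b, c)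
            * (\<Sum>y\<in>tuples d j. cnj (u j c y) * trunc_state d N mm u psi (Suc j) (y @ z)))"
proof -
  let ?R = "trunc_state d N mm u psi (Suc j)"
  let ?I = "\<lambda>c. \<Sum>y\<in>tuples d j. cnj (u j c y) * ?R (y @ z)"
  have step: "trunc_state d N mm u psi j (y' @ x # z) = (\<Sum>c<mm j. u j c (y' @ [x]) * ?I c)"
    if y': "y' \<in> tuples d (j - 1)" for y'
  proof -
    have "take j (y' @ x # z) = y' @ [x]" and "drop j (y' @ x # z) = z"
      using length_tuples[OF y'] j1 by auto
    thus ?thesis using trunc_state_step[OF jN] by (simp add: cut_proj_def ip_def)
  qed
  have "(\<Sum>y'\<in>tuples d (j - 1). cnj (u (j - 1) b y') * trunc_state d N mm u psi j (y' @ x # z))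
      = (\<Sum>y'\<in>tuples d (j - 1). \<Sum>c<mm j. cnj (u (j - 1) b y') * (u j c (y' @ [x]) * ?I c))"
    using step by (simp add: sum_distrib_left)
  also have "\<dots> = (\<Sum>c<mm j. \<Sum>y'\<in>tuples d (j - 1). cnj (u (j - 1) b y') * (u j c (y' @ [x]) * ?I c))"
    by (rule sum.swap)
  also have "\<dots> = (\<Sum>c<mm j. mps_tensor d mm u j x $$ (b, c) * ?I c)"
    using b by (intro sum.cong refl) (simp add: mps_tensor_def sum_distrib_right mult.assoc)
  finally show ?thesis .
qed

lemma mat_chain_trunc_state:
  assumes mN: "mm N = 1" and uN: "u N 0 = psi"
  shows "1 \<le> j \<Longrightarrow> j \<le> N \<Longrightarrow> length z = N + 1 - j \<Longrightarrow>
    mat_chain (mps_tensor d mm u) (\<lambda>k. mm (k - 1)) j z \<in> carrier_mat (mm (j - 1)) 1 \<and>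
    (\<forall>b<mm (j - 1). mat_chain (mps_tensor d mm u) (\<lambda>k. mm (k - 1)) j z $$ (b, 0)
       = (\<Sum>y\<in>tuples d (j - 1). cnj (u (j - 1) b y) * trunc_state d N mm u psi j (y @ z)))"
proof (induction z arbitrary: j)
  case Nil
  then show ?case by simp
next
  case (Cons x z')
  let ?A = "mps_tensor d mm u" and ?D = "\<lambda>k. mm (k - 1)"
  have ch: "mat_chain ?A ?D j (x # z') = ?A j x * mat_chain ?A ?D (Suc j) z'" by simp
  show ?case
  proof (cases "z' = []")
    case True
    hence jN: "j = N" using Cons.prems by simp
    have "mat_chain ?A ?D j (x # z') = ?A N x"
      using True jN mN mps_tensor_carrier[of d mm u N x] by simp
    moreover have "?A N x $$ (b, 0)
       = (\<Sum>y\<in>tuples d (j - 1). cnj (u (j - 1) b y) * trunc_state d N mm u psi j (y @ [x]))"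
      if "b < mm (j - 1)" for b
      using that jN mN uN by (simp add: mps_tensor_def trunc_state_final)
    ultimately show ?thesis using True jN mN mps_tensor_carrier[of d mm u N x] by auto
  next
    case False
    have jN: "j < N" and j1: "1 \<le> j" using Cons.prems False by (cases z', auto)+
    have IH: "mat_chain ?A ?D (Suc j) z' \<in> carrier_mat (mm j) 1"
      "\<And>c. c < mm j \<Longrightarrow> mat_chain ?A ?D (Suc j) z' $$ (c, 0)
          = (\<Sum>y\<in>tuples d j. cnj (u j c y) * trunc_state d N mm u psi (Suc j) (y @ z'))"
      using Cons.IH[of "Suc j"] Cons.prems jN by auto
    have "mat_chain ?A ?D j (x # z') \<in> carrier_mat (mm (j - 1)) 1"
      unfolding ch by (rule mult_carrier_mat[OF mps_tensor_carrier[of d mm u j x] IH(1)])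
    moreover have "mat_chain ?A ?D j (x # z') $$ (b, 0)
       = (\<Sum>y\<in>tuples d (j - 1). cnj (u (j - 1) b y) * trunc_state d N mm u psi j (y @ x # z'))"
      if b: "b < mm (j - 1)" for b
    proof -
      have "mat_chain ?A ?D j (x # z') $$ (b, 0)
          = (\<Sum>c<mm j. ?A j x $$ (b, c) * mat_chain ?A ?D (Suc j) z' $$ (c, 0))"
        unfolding ch using b IH(1) by (subst index_mult_mat_sum) auto
      also have "\<dots> = (\<Sum>c<mm j. ?A j x $$ (b, c)
          * (\<Sum>y\<in>tuples d j. cnj (u j c y) * trunc_state d N mm u psi (Suc j) (y @ z')))"
        using IH(2) by simp
      also have "\<dots> = (\<Sum>y\<in>tuples d (j - 1).
          cnj (u (j - 1) b y) * trunc_state d N mm u psi j (y @ x # z'))"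
        by (rule trunc_state_transfer[symmetric]) (use jN j1 b in auto)
      finally show ?thesis .
    qed
    ultimately show ?thesis by blast
  qed
qed

lemma trunc_state_is_mps:
  assumes N1: "1 \<le> N" and m0: "mm 0 = 1" and mN: "mm N = 1" and mD: "\<forall>k\<le>N. mm k \<le> D"
    and uN: "u N 0 = psi" and u0: "u 0 0 [] = 1"
  shows "is_mps d N D (trunc_state d N mm u psi 1)"
  unfolding is_mps_def
proof (intro exI[of _ "mps_tensor d mm u"] exI[of _ "\<lambda>k. mm (k - 1)"] conjI)
  show "\<forall>xs\<in>tuples d N. trunc_state d N mm u psi 1 xs
      = mps_vec (mps_tensor d mm u) (\<lambda>k. mm (k - 1)) xs"
  proof
    fix xs assume xs: "xs \<in> tuples d N"
    have "length xs = N + 1 - 1" using length_tuples[OF xs] by simp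
    thus "trunc_state d N mm u psi 1 xs = mps_vec (mps_tensor d mm u) (\<lambda>k. mm (k - 1)) xs"
      using mat_chain_trunc_state[where mm=mm and N=N and u=u and psi=psi and j=1 and z=xs and d=d,
        OF mN uN] N1 m0 u0 unfolding mps_vec_def by simp
  qed
qed (use m0 mN mD in \<open>auto simp: carrier_matI\<close>)

text \<open>Errors of the successive cut projections add up (each later projection is a
  contraction and leaves the earlier error orthogonal).\<close>
lemma trunc_state_error:
  assumes on: "\<forall>k\<in>{1..<N}. orthonormal (tuples d k) (mm k) (u k)"
    and tk: "\<forall>k\<in>{1..<N}. nrm (tuples d N) (\<lambda>xs. psi xs - cut_proj d k (mm k) (u k) psi xs) \<le> t k"
  shows "1 \<le> j \<Longrightarrow>
    nrm (tuples d N) (\<lambda>xs. psi xs - trunc_state d N mm u psi j xs) \<le> (\<Sum>k\<in>{j..<N}. t k)"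
proof (induction "N - j" arbitrary: j)
  case 0
  hence "trunc_state d N mm u psi j = psi" by (simp add: trunc_state_final)
  thus ?case using 0 by (simp add: nrm_def)
next
  case (Suc t' j)
  hence jN: "j < N" by simp
  let ?g = "trunc_state d N mm u psi (Suc j)" and ?P = "cut_proj d j (mm j) (u j)"
  have onj: "orthonormal (tuples d j) (mm j) (u j)" using on jN Suc.prems by auto
  have "nrm (tuples d N) (\<lambda>xs. psi xs - trunc_state d N mm u psi j xs)
      = nrm (tuples d N) (\<lambda>xs. psi xs - ?P psi xs) + nrm (tuples d N) (?P (\<lambda>xs. psi xs - ?g xs))"
    unfolding trunc_state_step[OF jN] by (rule cut_proj_error_split[OF onj]) (use jN in simp)
  also have "\<dots> \<le> t j + nrm (tuples d N) (\<lambda>xs. psi xs - ?g xs)"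
    using tk jN Suc.prems cut_proj_contraction[OF onj, of N "\<lambda>xs. psi xs - ?g xs"] by force
  also have "\<dots> \<le> t j + (\<Sum>k\<in>{Suc j..<N}. t k)" using Suc by auto
  also have "\<dots> = (\<Sum>k\<in>{j..<N}. t k)" using jN by (simp add: sum.atLeast_Suc_lessThan)
  finally show ?case .
qed

lemma mps_from_cut_projections:
  assumes N1: "1 \<le> N" and D1: "1 \<le> D"
    and cuts: "\<forall>k\<in>{1..<N}. \<exists>m v. m \<le> D \<and> orthonormal (tuples d k) m v \<and>
                 nrm (tuples d N) (\<lambda>xs. psi xs - cut_proj d k m v psi xs) \<le> t"
  shows "\<exists>phi. is_mps d N D phi \<and> dist_sq d N psi phi \<le> (real N - 1) * t"
proof -
  from bchoice[OF cuts] obtain M where "\<forall>k\<in>{1..<N}. \<exists>v. M k \<le> D \<and>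
      orthonormal (tuples d k) (M k) v \<and> nrm (tuples d N) (\<lambda>xs. psi xs - cut_proj d k (M k) v psi xs) \<le> t"
    by blast
  from bchoice[OF this] obtain V where V: "\<forall>k\<in>{1..<N}. M k \<le> D \<and>
      orthonormal (tuples d k) (M k) (V k) \<and>
      nrm (tuples d N) (\<lambda>xs. psi xs - cut_proj d k (M k) (V k) psi xs) \<le> t"
    by blast
  define mm where "mm k = (if k = 0 \<or> k = N then 1 else M k)" for k
  define u where "u k = (if k = 0 then (\<lambda>_ _. 1) else if k = N then (\<lambda>_. psi) else V k)" for k
  define phi where "phi = trunc_state d N mm u psi 1"
  have "is_mps d N D phi" unfolding phi_def
    by (rule trunc_state_is_mps[OF N1]) (use V D1 N1 in \<open>auto simp: mm_def u_def\<close>)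
  moreover have "dist_sq d N psi phi \<le> (real N - 1) * t"
  proof -
    have "dist_sq d N psi phi = nrm (tuples d N) (\<lambda>xs. psi xs - trunc_state d N mm u psi 1 xs)"
      unfolding dist_sq_def nrm_def phi_def ..
    also have "\<dots> \<le> (\<Sum>k\<in>{1..<N}. t)"
      by (rule trunc_state_error) (use V in \<open>auto simp: mm_def u_def\<close>)
    also have "\<dots> = (real N - 1) * t" using N1 by (simp add: of_nat_diff)
    finally show ?thesis .
  qed
  ultimately show ?thesis by blast
qed

section \<open>Discarding small weights\<close>

lemma young_tail_estimate:
  fixes A B a :: real
  assumes a: "0 < a" "a < 1" and A: "0 \<le> A" and B: "0 \<le> B"
  shows "A powr ((1 - a) / a) * B \<le> a * (1 - a) powr ((1 - a) / a) * (A + B) powr (1 / a)"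
proof (cases "A = 0 \<or> B = 0")
  case True
  have "0 \<le> a * (1 - a) powr ((1 - a) / a) * (A + B) powr (1 / a)" using a by simp
  thus ?thesis using True by auto
next
  case False
  hence Ap: "0 < A" and Bp: "0 < B" using A B by auto
  let ?b = "(1 - a) / a"
  have "(A / (1 - a)) powr (1 - a) * (B / a) powr a \<le> (1 - a) * (A / (1 - a)) + a * (B / a)"
    using a Ap Bp by (intro Youngs_inequality_0) auto
  also have "\<dots> = A + B" using a by simp
  finally have y: "(A / (1 - a)) powr (1 - a) * (B / a) powr a \<le> A + B" .
  have "((A / (1 - a)) powr (1 - a) * (B / a) powr a) powr (1 / a) \<le> (A + B) powr (1 / a)"
    by (rule powr_mono2) (use a y in auto)
  also have "((A / (1 - a)) powr (1 - a) * (B / a) powr a) powr (1 / a)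
      = (A / (1 - a)) powr ?b * (B / a)"
    using a Ap Bp by (simp add: powr_mult powr_powr)
  finally have z: "(A / (1 - a)) powr ?b * (B / a) \<le> (A + B) powr (1 / a)" .
  have "A powr ?b * B = a * (1 - a) powr ?b * ((A / (1 - a)) powr ?b * (B / a))"
    using a Ap Bp by (simp add: powr_divide field_simps)
  also have "\<dots> \<le> a * (1 - a) powr ?b * (A + B) powr (1 / a)"
    by (rule mult_left_mono[OF z]) (use a in auto)
  finally show ?thesis .
qed

text \<open>Some D-element index set dominates its complement (the D largest weights), by
  maximising the total weight over all D-element sets.\<close>
lemma exists_dominant_subset:
  fixes lam :: "nat \<Rightarrow> real"
  assumes "D \<le> n"
  shows "\<exists>I \<subseteq> {..<n}. card I = D \<and> (\<forall>i\<in>I. \<forall>j\<in>{..<n} - I. lam j \<le> lam i)"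
proof -
  define S where "S = {I. I \<subseteq> {..<n} \<and> card I = D}"
  have finS: "finite S" unfolding S_def by (rule finite_subset[of _ "Pow {..<n}"]) auto
  have neS: "{..<D} \<in> S" unfolding S_def using assms by auto
  obtain I where IS: "I \<in> S" and Imax: "\<forall>J\<in>S. sum lam J \<le> sum lam I"
  proof -
    have "Max (sum lam ` S) \<in> sum lam ` S" using finS neS by (intro Max_in) auto
    then obtain I where "I \<in> S" "sum lam I = Max (sum lam ` S)" by auto
    moreover have "\<forall>J\<in>S. sum lam J \<le> Max (sum lam ` S)" using finS by auto
    ultimately show ?thesis using that by auto
  qed
  have Isub: "I \<subseteq> {..<n}" and cI: "card I = D" using IS unfolding S_def by auto
  have finI: "finite I" using Isub finite_subset by blast
  have "lam j \<le> lam i" if i: "i \<in> I" and j: "j \<in> {..<n} - I" for i j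
  proof (rule ccontr)
    assume "\<not> lam j \<le> lam i"
    define J where "J = insert j (I - {i})"
    have "card I > 0" using finI i card_gt_0_iff by blast
    hence "J \<in> S" unfolding S_def J_def using Isub i j cI finI by (auto simp: card_insert_if)
    moreover have "sum lam J = sum lam I - lam i + lam j"
      unfolding J_def using finI i j by (simp add: sum_diff1)
    ultimately show False using Imax \<open>\<not> lam j \<le> lam i\<close> by force
  qed
  thus ?thesis using Isub cI by blast
qed

lemma sum_le_threshold_powr:
  fixes lam :: "nat \<Rightarrow> real"
  assumes a: "0 < a" "a < 1" and bounds: "\<forall>j\<in>C. 0 \<le> lam j \<and> lam j \<le> t"
  shows "(\<Sum>j\<in>C. lam j) \<le> t powr (1 - a) * (\<Sum>j\<in>C. lam j powr a)"
proof -
  have "lam j \<le> lam j powr a * t powr (1 - a)" if j: "j \<in> C" for j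
  proof (cases "lam j = 0")
    case True then show ?thesis by simp
  next
    case False
    hence lp: "0 < lam j" using bounds j by force
    have "lam j = lam j powr a * lam j powr (1 - a)" using lp by (simp add: powr_add[symmetric])
    also have "\<dots> \<le> lam j powr a * t powr (1 - a)"
      using bounds j lp a by (intro mult_left_mono powr_mono2) auto
    finally show ?thesis .
  qed
  hence "(\<Sum>j\<in>C. lam j) \<le> (\<Sum>j\<in>C. lam j powr a * t powr (1 - a))" by (rule sum_mono)
  also have "\<dots> = t powr (1 - a) * (\<Sum>j\<in>C. lam j powr a)"
    by (simp add: sum_distrib_left mult.commute)
  finally show ?thesis .
qed

lemma discarded_weight_bound:
  fixes lam :: "nat \<Rightarrow> real"
  assumes a: "0 < a" "a < 1" and nn: "\<forall>i<n. 0 \<le> lam i" and D: "1 \<le> D"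
    and I: "I \<subseteq> {..<n}" "card I = D" and dom: "\<forall>i\<in>I. \<forall>j\<in>{..<n} - I. lam j \<le> lam i"
  shows "(\<Sum>j\<in>{..<n} - I. lam j)
     \<le> a * (1 - a) powr ((1 - a) / a) * (\<Sum>i<n. lam i powr a) powr (1 / a)
        / real D powr ((1 - a) / a)"
proof -
  define b where "b = (1 - a) / a"
  define C where "C = {..<n} - I"
  define A where "A = (\<Sum>i\<in>I. lam i powr a)"
  define B where "B = (\<Sum>j\<in>C. lam j powr a)"
  have finI: "finite I" using I(1) finite_subset by blast
  have Ine: "I \<noteq> {}" using I(2) D by auto
  define t where "t = Min (lam ` I)"
  obtain i0 where i0: "i0 \<in> I" "t = lam i0" unfolding t_def using finI Ine
    by (metis (mono_tags, lifting) Min_in finite_imageI image_iff image_is_empty)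
  have t0: "0 \<le> t" using i0 I(1) nn by auto
  have tail: "(\<Sum>j\<in>C. lam j) \<le> t powr (1 - a) * B"
    unfolding B_def by (intro sum_le_threshold_powr[OF a]) (use dom i0 nn in \<open>auto simp: C_def\<close>)
  have At: "real D * t powr a \<le> A"
  proof -
    have "\<forall>i\<in>I. t \<le> lam i" unfolding t_def using finI by auto
    hence "(\<Sum>i\<in>I. t powr a) \<le> A" unfolding A_def
      using t0 by (intro sum_mono powr_mono2) (use a in auto)
    thus ?thesis using I(2) by simp
  qed
  have Dp: "0 < real D" using D by simp
  have tb: "t powr (1 - a) \<le> (A / real D) powr b"
  proof -
    have "t powr (1 - a) = (t powr a) powr b" unfolding b_def using a by (simp add: powr_powr)
    also have "\<dots> \<le> (A / real D) powr b"
      using At Dp a by (intro powr_mono2) (auto simp: field_simps b_def)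
    finally show ?thesis .
  qed
  have A0: "0 \<le> A" unfolding A_def by (intro sum_nonneg) auto
  have B0: "0 \<le> B" unfolding B_def by (intro sum_nonneg) auto
  have T: "(\<Sum>i<n. lam i powr a) = A + B"
    unfolding A_def B_def C_def using I(1) by (metis add.commute finite_lessThan sum.subset_diff)
  have "(\<Sum>j\<in>C. lam j) \<le> (A / real D) powr b * B"
    using tail tb B0 by (meson mult_right_mono order_trans)
  also have "\<dots> = A powr b * B / real D powr b" using A0 Dp by (simp add: powr_divide)
  also have "\<dots> \<le> a * (1 - a) powr b * (A + B) powr (1 / a) / real D powr b"
    using young_tail_estimate[OF a A0 B0] Dp unfolding b_def by (simp add: divide_right_mono)
  finally show ?thesis using T by (simp add: C_def b_def)
qed

lemma keep_largest_weights:
  fixes lam :: "nat \<Rightarrow> real"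
  assumes a: "0 < a" "a < 1" and nn: "\<forall>i<n. 0 \<le> lam i" and D: "1 \<le> D"
  shows "\<exists>I \<subseteq> {..<n}. card I \<le> D \<and>
    (\<Sum>i\<in>{..<n} - I. lam i) \<le> a * (1 - a) powr ((1 - a) / a) * (\<Sum>i<n. lam i powr a) powr (1 / a)
        / real D powr ((1 - a) / a)"
proof (cases "n \<le> D")
  case True
  have "0 \<le> a * (1 - a) powr ((1 - a) / a) * (\<Sum>i<n. lam i powr a) powr (1 / a)
      / real D powr ((1 - a) / a)"
    using a by simp
  thus ?thesis using True by (intro exI[of _ "{..<n}"]) auto
next
  case False
  then obtain I where I: "I \<subseteq> {..<n}" "card I = D"
    and dom: "\<forall>i\<in>I. \<forall>j\<in>{..<n} - I. lam j \<le> lam i"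
    using exists_dominant_subset[of D n lam] by auto
  show ?thesis using discarded_weight_bound[OF a nn D I dom] I by auto
qed

section \<open>Truncation at a single cut and the main theorem\<close>

lemma rdm_carrier: "rdm d N psi k \<in> carrier_mat (d ^ k) (d ^ k)"
  unfolding rdm_def by simp

lemma rdm_hermitian: "adjm (rdm d N psi k) = rdm d N psi k"
proof (rule eq_matI)
  fix i j assume "i < dim_row (rdm d N psi k)" "j < dim_col (rdm d N psi k)"
  hence "i < d ^ k" "j < d ^ k" by (auto simp: rdm_def)
  thus "adjm (rdm d N psi k) $$ (i,j) = rdm d N psi k $$ (i,j)"
    by (simp add: rdm_def cnj_sum mult.commute)
qed (auto simp: rdm_def)

text \<open>The weight of psi along the c-th column of U, viewed as a vector on the first k
  sites; for U diagonalising the reduced density matrix these are its eigenvalues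
  (the squared Schmidt coefficients).\<close>
definition schmidt_weight :: "nat \<Rightarrow> nat \<Rightarrow> (nat list \<Rightarrow> complex) \<Rightarrow> nat \<Rightarrow> complex mat \<Rightarrow>
    nat \<Rightarrow> real" where
  "schmidt_weight d N psi k U c =
     (\<Sum>z\<in>tuples d (N - k). (cmod (\<Sum>i<d ^ k. cnj (U $$ (i, c)) * psi (dec d k i @ z)))^2)"

lemma schmidt_weight_nonneg: "0 \<le> schmidt_weight d N psi k U c"
  unfolding schmidt_weight_def by (simp add: sum_nonneg)

lemma gram_quadratic_form:
  fixes x :: "nat \<Rightarrow> complex" and p :: "nat \<Rightarrow> 'z \<Rightarrow> complex"
  shows "(\<Sum>j<n. (\<Sum>i<n. cnj (x i) * (\<Sum>z\<in>Z. p i z * cnj (p j z))) * x j)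
       = complex_of_real (\<Sum>z\<in>Z. (cmod (\<Sum>i<n. cnj (x i) * p i z))^2)"
proof -
  let ?F = "\<lambda>i j z. cnj (x i) * p i z * (cnj (p j z) * x j)"
  have "(\<Sum>j<n. (\<Sum>i<n. cnj (x i) * (\<Sum>z\<in>Z. p i z * cnj (p j z))) * x j)
      = (\<Sum>j<n. \<Sum>i<n. \<Sum>z\<in>Z. ?F i j z)"
    by (simp add: sum_distrib_left sum_distrib_right mult_ac)
  also have "\<dots> = (\<Sum>i<n. \<Sum>j<n. \<Sum>z\<in>Z. ?F i j z)" by (rule sum.swap)
  also have "\<dots> = (\<Sum>i<n. \<Sum>z\<in>Z. \<Sum>j<n. ?F i j z)" by (rule sum.cong[OF refl], rule sum.swap)
  also have "\<dots> = (\<Sum>z\<in>Z. \<Sum>i<n. \<Sum>j<n. ?F i j z)" by (rule sum.swap)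
  also have "\<dots> = (\<Sum>z\<in>Z. \<Sum>i<n. \<Sum>j<n. (cnj (x i) * p i z) * cnj (cnj (x j) * p j z))"
    by (intro sum.cong refl) (simp add: mult_ac)
  also have "\<dots> = (\<Sum>z\<in>Z. (\<Sum>i<n. cnj (x i) * p i z) * cnj (\<Sum>j<n. cnj (x j) * p j z))"
    by (simp only: cnj_sum sum_product)
  also have "\<dots> = complex_of_real (\<Sum>z\<in>Z. (cmod (\<Sum>i<n. cnj (x i) * p i z))^2)"
    unfolding of_real_sum by (intro sum.cong refl) (rule complex_norm_square[symmetric])
  finally show ?thesis .
qed

lemma unitary_parseval:
  fixes v :: "nat \<Rightarrow> complex"
  assumes U: "unitary n U"
  shows "(\<Sum>c<n. (cmod (\<Sum>i<n. cnj (U $$ (i,c)) * v i))^2) = (\<Sum>i<n. (cmod (v i))^2)"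
proof -
  have Uc: "U \<in> carrier_mat n n" using U by (simp add: unitary_def)
  have UU: "U * adjm U = 1\<^sub>m n" by (rule unitary_right_inverse[OF U])
  let ?F = "\<lambda>c i j. cnj (U $$ (i,c)) * v i * (U $$ (j,c) * cnj (v j))"
  have "complex_of_real (\<Sum>c<n. (cmod (\<Sum>i<n. cnj (U $$ (i,c)) * v i))^2)
      = (\<Sum>c<n. \<Sum>i<n. \<Sum>j<n. (cnj (U $$ (i,c)) * v i) * cnj (cnj (U $$ (j,c)) * v j))"
    unfolding of_real_sum complex_norm_square cnj_sum sum_product ..
  also have "\<dots> = (\<Sum>c<n. \<Sum>i<n. \<Sum>j<n. ?F c i j)"
    by (intro sum.cong refl) (simp add: mult_ac)
  also have "\<dots> = (\<Sum>i<n. \<Sum>c<n. \<Sum>j<n. ?F c i j)" by (rule sum.swap)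
  also have "\<dots> = (\<Sum>i<n. \<Sum>j<n. \<Sum>c<n. ?F c i j)" by (rule sum.cong[OF refl], rule sum.swap)
  also have "\<dots> = (\<Sum>i<n. \<Sum>j<n. v i * cnj (v j) * (U * adjm U) $$ (j,i))"
  proof (intro sum.cong refl)
    fix i j assume i: "i \<in> {..<n}" and j: "j \<in> {..<n}"
    have "(U * adjm U) $$ (j,i) = (\<Sum>c<n. U $$ (j,c) * cnj (U $$ (i,c)))"
      using Uc i j by (subst index_mult_mat_sum) auto
    thus "(\<Sum>c<n. ?F c i j) = v i * cnj (v j) * (U * adjm U) $$ (j,i)"
      by (simp add: sum_distrib_left mult_ac)
  qed
  also have "\<dots> = (\<Sum>i<n. \<Sum>j<n. if j = i then v i * cnj (v j) else 0)"
    using UU by (intro sum.cong refl) auto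
  also have "\<dots> = (\<Sum>i<n. v i * cnj (v i))" by (simp add: sum.delta)
  also have "\<dots> = complex_of_real (\<Sum>i<n. (cmod (v i))^2)"
    unfolding of_real_sum by (intro sum.cong refl) (rule complex_norm_square[symmetric])
  finally show ?thesis using of_real_eq_iff by blast
qed

lemma rdm_eigenvalues:
  assumes U: "unitary (d ^ k) U" and les: "length es = d ^ k"
    and rho: "rdm d N psi k = U * diagm es * adjm U" and c: "c < d ^ k"
  shows "es ! c = complex_of_real (schmidt_weight d N psi k U c)"
proof -
  define n where "n = d ^ k"
  define \<rho> where "\<rho> = rdm d N psi k"
  have Uc: "U \<in> carrier_mat n n" using U by (simp add: unitary_def n_def)
  have \<rho>c: "\<rho> \<in> carrier_mat n n" unfolding \<rho>_def n_def by (rule rdm_carrier)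
  have Dc: "diagm es \<in> carrier_mat n n" using diagm_carrier[of es] les by (simp add: n_def)
  have "adjm U * \<rho> * U = (adjm U * U) * diagm es * (adjm U * U)"
    unfolding \<rho>_def rho using Uc Dc
    by (simp add: assoc_mult_mat[of _ n n _ n _ n] mult_carrier_mat[of _ n n _ n]
        adjm_carrier[OF Uc])
  hence DD: "adjm U * \<rho> * U = diagm es" using U Dc by (simp add: unitary_def n_def)
  have "es ! c = (adjm U * \<rho> * U) $$ (c,c)" unfolding DD using c les by (simp add: diagm_def)
  also have "\<dots> = (\<Sum>j<n. (adjm U * \<rho>) $$ (c,j) * U $$ (j,c))"
    using Uc \<rho>c c by (subst index_mult_mat_sum) (auto simp: n_def)
  also have "\<dots> = (\<Sum>j<n. (\<Sum>i<n. cnj (U $$ (i,c)) * \<rho> $$ (i,j)) * U $$ (j,c))"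
  proof (rule sum.cong[OF refl])
    fix j assume j: "j \<in> {..<n}"
    have "(adjm U * \<rho>) $$ (c,j) = (\<Sum>i<n. adjm U $$ (c,i) * \<rho> $$ (i,j))"
      using Uc \<rho>c c j by (subst index_mult_mat_sum) (auto simp: n_def)
    thus "(adjm U * \<rho>) $$ (c,j) * U $$ (j,c)
        = (\<Sum>i<n. cnj (U $$ (i,c)) * \<rho> $$ (i,j)) * U $$ (j,c)"
      using Uc c by (simp add: n_def)
  qed
  also have "\<dots> = (\<Sum>j<n. (\<Sum>i<n. cnj (U $$ (i,c))
      * (\<Sum>z\<in>tuples d (N - k). psi (dec d k i @ z) * cnj (psi (dec d k j @ z)))) * U $$ (j,c))"
    by (intro sum.cong refl) (simp add: \<rho>_def rdm_def n_def)
  also have "\<dots> = complex_of_real (schmidt_weight d N psi k U c)"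
    unfolding schmidt_weight_def n_def by (rule gram_quadratic_form)
  finally show ?thesis .
qed

lemma schmidt_weight_sum:
  assumes d: "0 < d" and kN: "k \<le> N" and U: "unitary (d ^ k) U"
  shows "(\<Sum>c<d ^ k. schmidt_weight d N psi k U c) = nrm (tuples d N) psi"
proof -
  let ?Z = "tuples d (N - k)"
  have "(\<Sum>c<d ^ k. schmidt_weight d N psi k U c)
      = (\<Sum>z\<in>?Z. \<Sum>c<d ^ k. (cmod (\<Sum>i<d ^ k. cnj (U $$ (i, c)) * psi (dec d k i @ z)))^2)"
    unfolding schmidt_weight_def by (rule sum.swap)
  also have "\<dots> = (\<Sum>z\<in>?Z. \<Sum>i<d ^ k. (cmod (psi (dec d k i @ z)))^2)"
    by (intro sum.cong refl unitary_parseval[OF U])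
  also have "\<dots> = (\<Sum>z\<in>?Z. nrm (tuples d k) (\<lambda>y. psi (y @ z)))"
    unfolding nrm_def by (intro sum.cong refl) (rule sum_tuples_dec[OF d, symmetric])
  also have "\<dots> = nrm (tuples d N) psi" by (rule nrm_split[OF kN, symmetric])
  finally show ?thesis .
qed

lemma unitary_columns_cut_error:
  assumes d: "0 < d" and kN: "k \<le> N" and U: "unitary (d ^ k) U" and I: "I \<subseteq> {..<d ^ k}"
  shows "\<exists>u. orthonormal (tuples d k) (card I) u \<and>
    nrm (tuples d N) (\<lambda>xs. psi xs - cut_proj d k (card I) u psi xs)
      = nrm (tuples d N) psi - (\<Sum>c\<in>I. schmidt_weight d N psi k U c)"
proof -
  define n where "n = d ^ k"
  define m where "m = card I"
  have finI: "finite I" using I finite_subset by blast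
  define g where "g a = sorted_list_of_set I ! a" for a
  have gI: "g ` {..<m} = I" unfolding g_def m_def using finI
    by (metis atLeast0LessThan distinct_card distinct_sorted_list_of_set image_set map_nth
        set_sorted_list_of_set set_upt sorted_list_of_set(1))
  have ginj: "inj_on g {..<m}" unfolding g_def m_def using finI
    by (simp add: inj_on_def nth_eq_iff_index_eq)
  have gn: "g a < n" if "a < m" for a using gI I that by (auto simp: n_def)
  define u where "u a ys = U $$ (inv_into {..<n} (dec d k) ys, g a)" for a ys
  have u_dec: "u a (dec d k i) = U $$ (i, g a)" if "i < n" for a i
    unfolding u_def using that dec_inj[of d k] by (simp add: n_def inv_into_f_f)
  have ip_u: "ip (tuples d k) (u a) f = (\<Sum>i<n. cnj (U $$ (i, g a)) * f (dec d k i))" for a f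
    unfolding ip_def sum_tuples_dec[OF d] n_def by (intro sum.cong refl) (simp add: u_dec n_def)
  have on: "orthonormal (tuples d k) m u"
    unfolding orthonormal_def
  proof (intro allI impI)
    fix a b assume a: "a < m" and b: "b < m"
    have "ip (tuples d k) (u a) (u b) = (\<Sum>i<n. cnj (U $$ (i, g a)) * U $$ (i, g b))"
      unfolding ip_u by (intro sum.cong refl) (simp add: u_dec)
    also have "\<dots> = (adjm U * U) $$ (g a, g b)"
      using U gn[OF a] gn[OF b] by (subst index_mult_mat_sum) (auto simp: unitary_def n_def)
    also have "\<dots> = (if a = b then 1 else 0)"
      using U gn[OF a] gn[OF b] ginj a b by (auto simp: unitary_def n_def inj_on_def)
    finally show "ip (tuples d k) (u a) (u b) = (if a = b then 1 else 0)" .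
  qed
  have "nrm (tuples d N) (\<lambda>xs. psi xs - cut_proj d k m u psi xs)
      = nrm (tuples d N) psi
        - (\<Sum>a<m. \<Sum>z\<in>tuples d (N - k). (cmod (ip (tuples d k) (u a) (\<lambda>y. psi (y @ z))))^2)"
    by (rule cut_proj_error[OF on kN])
  also have "(\<Sum>a<m. \<Sum>z\<in>tuples d (N - k). (cmod (ip (tuples d k) (u a) (\<lambda>y. psi (y @ z))))^2)
      = (\<Sum>a<m. schmidt_weight d N psi k U (g a))"
    unfolding ip_u schmidt_weight_def n_def ..
  also have "\<dots> = (\<Sum>c\<in>I. schmidt_weight d N psi k U c)"
    using sum.reindex[OF ginj, of "schmidt_weight d N psi k U"] gI by simp
  finally show ?thesis using on unfolding m_def by blast
qed

lemma power_sum_pos: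
  fixes lam :: "nat \<Rightarrow> real"
  assumes nn: "\<forall>c<n. 0 \<le> lam c" and one: "(\<Sum>c<n. lam c) = 1"
  shows "0 < (\<Sum>c<n. lam c powr a)"
proof -
  obtain c where c: "c < n" "0 < lam c"
  proof (rule ccontr)
    assume "\<not> thesis"
    hence "\<forall>c<n. lam c \<le> 0" using that by force
    hence "(\<Sum>c<n. lam c) \<le> 0" by (intro sum_nonpos) auto
    thus False using one by simp
  qed
  have "lam c powr a \<le> (\<Sum>c<n. lam c powr a)" using c by (intro member_le_sum) auto
  moreover have "0 < lam c powr a" using c by simp
  ultimately show ?thesis by linarith
qed

lemma renyi_bound_tr_pow:
  assumes a: "a < 1" and T: "0 < tr_pow a \<rho>" and ren: "renyi a \<rho> \<le> s"
  shows "tr_pow a \<rho> \<le> exp ((1 - a) * s)"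
proof -
  have "1 / (1 - a) * ln (tr_pow a \<rho>) \<le> s" using ren unfolding renyi_def .
  hence "ln (tr_pow a \<rho>) \<le> (1 - a) * s" using a by (simp add: field_simps)
  thus ?thesis using T by (metis exp_le_cancel_iff exp_ln)
qed

definition cut_error_bound :: "real \<Rightarrow> real \<Rightarrow> nat \<Rightarrow> real" where
  "cut_error_bound a s D =
     a * (1 - a) powr ((1 - a) / a) * exp ((1 - a) * s) powr (1 / a) / real D powr ((1 - a) / a)"

lemma single_cut_truncation:
  assumes d: "0 < d" and kN: "k \<le> N" and nz: "normalized d N psi"
    and a: "0 < a" "a < 1" and ren: "renyi a (rdm d N psi k) \<le> s" and D: "1 \<le> D"
  shows "\<exists>m u. m \<le> D \<and> orthonormal (tuples d k) m u \<and>
    nrm (tuples d N) (\<lambda>xs. psi xs - cut_proj d k m u psi xs) \<le> cut_error_bound a s D"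
proof -
  define n where "n = d ^ k"
  obtain U es where U: "unitary n U" and les: "length es = n"
    and rho: "rdm d N psi k = U * diagm es * adjm U"
    using hermitian_spectral[OF rdm_carrier rdm_hermitian] unfolding n_def by blast
  define lam where "lam = schmidt_weight d N psi k U"
  have lam0: "\<forall>c<n. 0 \<le> lam c" unfolding lam_def by (simp add: schmidt_weight_nonneg)
  have sum_lam: "(\<Sum>c<n. lam c) = 1"
    using schmidt_weight_sum[OF d kN U[unfolded n_def]] nz
    unfolding lam_def n_def normalized_def nrm_def by simp
  define T where "T = (\<Sum>c<n. lam c powr a)"
  have "tr_pow a (rdm d N psi k) = T"
    unfolding T_def tr_pow_unitary_diag[OF U les rho]
    using rdm_eigenvalues[OF U[unfolded n_def] les[unfolded n_def] rho] by (simp add: lam_def n_def)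
  hence T_pos: "0 < T" and T_le: "T \<le> exp ((1 - a) * s)"
    using power_sum_pos[OF lam0 sum_lam] renyi_bound_tr_pow[OF a(2) _ ren]
    unfolding T_def by auto
  obtain I where I: "I \<subseteq> {..<n}" "card I \<le> D"
    and tail: "(\<Sum>c\<in>{..<n} - I. lam c)
      \<le> a * (1 - a) powr ((1 - a) / a) * T powr (1 / a) / real D powr ((1 - a) / a)"
    using keep_largest_weights[OF a lam0 D] unfolding T_def by blast
  obtain u where u: "orthonormal (tuples d k) (card I) u"
    and err: "nrm (tuples d N) (\<lambda>xs. psi xs - cut_proj d k (card I) u psi xs)
      = nrm (tuples d N) psi - (\<Sum>c\<in>I. lam c)"
    using unitary_columns_cut_error[OF d kN U[unfolded n_def] I(1)[unfolded n_def]]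
    unfolding lam_def by blast
  have "nrm (tuples d N) (\<lambda>xs. psi xs - cut_proj d k (card I) u psi xs)
      = (\<Sum>c<n. lam c) - (\<Sum>c\<in>I. lam c)"
    using err sum_lam nz unfolding normalized_def nrm_def by simp
  also have "\<dots> = (\<Sum>c\<in>{..<n} - I. lam c)" using I(1) by (simp add: sum_diff)
  also have "\<dots> \<le> a * (1 - a) powr ((1 - a) / a) * T powr (1 / a) / real D powr ((1 - a) / a)"
    by (rule tail)
  also have "\<dots> \<le> cut_error_bound a s D"
  proof -
    have "T powr (1 / a) \<le> exp ((1 - a) * s) powr (1 / a)"
      using T_pos T_le a by (intro powr_mono2) auto
    thus ?thesis unfolding cut_error_bound_def using a D
      by (intro divide_right_mono mult_left_mono) auto
  qed
  finally show ?thesis using I(2) u by blast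
qed

lemma bond_dimension_suffices:
  fixes a s e :: real and N D :: nat
  assumes a: "0 < a" "a < 1" and e: "0 < e" and N: "2 \<le> N"
    and DK: "real D \<ge> (1 - a) * exp s * (2 * (real N - 1) / e) powr (a / (1 - a))"
  shows "1 \<le> D" and "cut_error_bound a s D \<le> e / (2 * (real N - 1))"
proof -
  define b where "b = (1 - a) / a"
  define x where "x = 2 * (real N - 1) / e"
  have xp: "0 < x" unfolding x_def using e N by simp
  define K where "K = (1 - a) * exp s * x powr (a / (1 - a))"
  have Kp: "0 < K" unfolding K_def using a xp by simp
  have DK': "K \<le> real D" using DK unfolding K_def x_def .
  thus D1: "1 \<le> D" using Kp by linarith
  have b0: "0 < b" unfolding b_def using a by simp
  have "K powr b = (1 - a) powr b * exp s powr b * (x powr (a / (1 - a))) powr b"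
    unfolding K_def using a xp by (simp add: powr_mult)
  also have "(x powr (a / (1 - a))) powr b = x"
    unfolding b_def using a xp by (simp add: powr_powr)
  finally have Kb: "K powr b = (1 - a) powr b * exp (s * b) * x" by (simp add: exp_powr_real)
  have Db: "K powr b \<le> real D powr b" using Kp DK' b0 by (intro powr_mono2) auto
  have E: "exp ((1 - a) * s) powr (1 / a) = exp (s * b)"
    unfolding exp_powr_real b_def by (simp add: field_simps)
  have pos: "0 < (1 - a) powr b * exp (s * b) * x" using a xp by simp
  have "cut_error_bound a s D = a * (1 - a) powr b * exp (s * b) / real D powr b"
    unfolding cut_error_bound_def E b_def ..
  also have "\<dots> \<le> a * (1 - a) powr b * exp (s * b) / ((1 - a) powr b * exp (s * b) * x)"
    using Db Kb pos a D1 by (intro divide_left_mono) auto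
  also have "\<dots> = a / x" using a by (simp add: field_simps)
  also have "\<dots> \<le> 1 / x" using a xp by (simp add: divide_right_mono)
  also have "\<dots> = e / (2 * (real N - 1))" unfolding x_def by simp
  finally show "cut_error_bound a s D \<le> e / (2 * (real N - 1))" .
qed

theorem mainTheorem3:
  fixes d N :: nat and psi :: "nat list \<Rightarrow> complex" and \<alpha> s \<epsilon> :: real and D :: nat
  assumes "N \<ge> 2"
    and "normalized d N psi"
    and "0 < \<alpha>" and "\<alpha> < 1"
    and "\<forall>k\<in>{1..N-1}. renyi \<alpha> (rdm d N psi k) \<le> s"
    and "\<epsilon> > 0"
    and "real D \<ge> (1 - \<alpha>) * exp s * (2 * (real N - 1) / \<epsilon>) powr (\<alpha> / (1 - \<alpha>))"
  shows "\<exists>phi. is_mps d N D phi \<and> dist_sq d N psi phi \<le> \<epsilon>"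
proof -
  have d: "0 < d" using normalized_imp_pos_dim[OF assms(2)] assms(1) by simp
  have D1: "1 \<le> D" and bound: "cut_error_bound \<alpha> s D \<le> \<epsilon> / (2 * (real N - 1))"
    using bond_dimension_suffices[OF assms(3,4,6,1,7)] by auto
  have cuts: "\<forall>k\<in>{1..<N}. \<exists>m u. m \<le> D \<and> orthonormal (tuples d k) m u \<and>
      nrm (tuples d N) (\<lambda>xs. psi xs - cut_proj d k m u psi xs) \<le> cut_error_bound \<alpha> s D"
  proof
    fix k assume k: "k \<in> {1..<N}"
    show "\<exists>m u. m \<le> D \<and> orthonormal (tuples d k) m u \<and>
        nrm (tuples d N) (\<lambda>xs. psi xs - cut_proj d k m u psi xs) \<le> cut_error_bound \<alpha> s D"
      by (rule single_cut_truncation[OF d _ assms(2,3,4) _ D1]) (use k assms(5) in auto)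
  qed
  obtain phi where phi: "is_mps d N D phi"
    and err: "dist_sq d N psi phi \<le> (real N - 1) * cut_error_bound \<alpha> s D"
    using mps_from_cut_projections[OF _ D1 cuts] assms(1) by auto
  have "(real N - 1) * cut_error_bound \<alpha> s D \<le> (real N - 1) * (\<epsilon> / (2 * (real N - 1)))"
    using bound assms(1) by (intro mult_left_mono) auto
  also have "\<dots> = \<epsilon> / 2" using assms(1) by (simp add: field_simps)
  also have "\<dots> \<le> \<epsilon>" using assms(6) by simp
  finally show ?thesis using phi err by auto
qed

end
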